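(* Let $G$ be a countable directed graph, let $x\in\mathcal{V}(G)$, and assume there are exactly $n$ distinct loop edges with source $x$ (edges $e$ with $s(e)=r(e)=x$), where $n$ is a nonnegative integer. Let $e_1,\dots,e_n$ be these edges. Then the map $\phi_x:\mathfrak{M}_{G,x}\to\mathbb{C}^n$, $\phi_x(\rho)=(\rho(L_{e_1}),\dots,\rho(L_{e_n}))$, is a homeomorphism of $\mathfrak{M}_{G,x}$ (with the weak-$*$ topology) onto the closed unit ball $\mathbb{B}_n=\{\lambda\in\mathbb{C}^n:\sum_i|\lambda_i|^2\le1\}$.
   Context: A countable directed graph $G$ has countable vertex set $\mathcal{V}(G)$, edge set $\mathcal{E}(G)$, range and source maps $r,s$. The free semigroupoid $\mathbb{F}^+(G)$ consists of vertices (paths of length $0$) and finite paths $w=e_k\cdots e_1$ with $s(e_i)=r(e_{i-1})$, $s(w)=s(e_1)$, $r(w)=r(e_k)$. On $\ell^2(\mathbb{F}^+(G))$ with orthonormal basis $\{\xi_w\}$, $L_e\xi_w=\xi_{ew}$ if $s(e)=r(w)$ and $0$ otherwise, and $P_v$ is the projection onto $\overline{\operatorname{span}}\{\xi_w:r(w)=v\}$. The tensor algebra $\mathcal{T}_+(G)$ is the norm-closed operator algebra generated by all $L_e$ and $P_v$. $\mathfrak{M}_G$ denotes the set of nonzero multiplicative linear functionals (characters) on $\mathcal{T}_+(G)$ with the weak-$*$ topology, and $\mathfrak{M}_{G,x}=\{\rho\in\mathfrak{M}_G:\rho(P_x)=1\}$. *)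

theory Defs
  imports "HOL-Analysis.Analysis"
begin

text \<open>Elements of the free semigroupoid are either
  vertices (paths of length 0) or nonempty edge lists [e_k, ..., e_1]
  (written left to right as e_k ... e_1).\<close>

definition countable_digraph ::
  "'v set \<Rightarrow> 'e set \<Rightarrow> ('e \<Rightarrow> 'v) \<Rightarrow> ('e \<Rightarrow> 'v) \<Rightarrow> bool" where
  "countable_digraph V E r s \<longleftrightarrow>
     countable V \<and> countable E \<and> (\<forall>e\<in>E. r e \<in> V \<and> s e \<in> V)"

datatype ('v, 'e) gpath = Vtx 'v | Edges "'e list"

fun prange :: "('e \<Rightarrow> 'v) \<Rightarrow> ('v, 'e) gpath \<Rightarrow> 'v" where
  "prange r (Vtx v) = v"
| "prange r (Edges es) = r (hd es)"

fun psource :: "('e \<Rightarrow> 'v) \<Rightarrow> ('v, 'e) gpath \<Rightarrow> 'v" where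
  "psource s (Vtx v) = v"
| "psource s (Edges es) = s (last es)"

definition valid_path ::
  "'v set \<Rightarrow> 'e set \<Rightarrow> ('e \<Rightarrow> 'v) \<Rightarrow> ('e \<Rightarrow> 'v) \<Rightarrow> ('v, 'e) gpath \<Rightarrow> bool" where
  "valid_path V E r s w = (case w of
      Vtx v \<Rightarrow> v \<in> V
    | Edges es \<Rightarrow> es \<noteq> [] \<and> set es \<subseteq> E \<and>
                  (\<forall>i. Suc i < length es \<longrightarrow> s (es ! i) = r (es ! Suc i)))"

type_synonym ('v, 'e) vec = "('v, 'e) gpath \<Rightarrow> complex"
type_synonym ('v, 'e) op = "('v, 'e) vec \<Rightarrow> ('v, 'e) vec"

definition l2 ::
  "'v set \<Rightarrow> 'e set \<Rightarrow> ('e \<Rightarrow> 'v) \<Rightarrow> ('e \<Rightarrow> 'v) \<Rightarrow> ('v, 'e) vec set" where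
  "l2 V E r s = {f. (\<forall>u. \<not> valid_path V E r s u \<longrightarrow> f u = 0) \<and>
                     (\<lambda>u. (cmod (f u))\<^sup>2) summable_on UNIV}"

definition l2norm :: "('v, 'e) vec \<Rightarrow> real" where
  "l2norm f = sqrt (\<Sum>\<^sub>\<infinity>u. (cmod (f u))\<^sup>2)"

text \<open>Operators are represented as maps on all functions that vanish off l2.
  L_e xi_w = xi_{ew} if s(e) = r(w), else 0; P_v projects onto span{xi_w : r(w) = v}.\<close>

definition shiftL ::
  "'v set \<Rightarrow> 'e set \<Rightarrow> ('e \<Rightarrow> 'v) \<Rightarrow> ('e \<Rightarrow> 'v) \<Rightarrow> 'e \<Rightarrow> ('v, 'e) op" where
  "shiftL V E r s e f = (if f \<in> l2 V E r s then
     (\<lambda>u. if valid_path V E r s u then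
            (case u of
               Edges (e' # es) \<Rightarrow>
                 (if e' = e then f (if es = [] then Vtx (s e) else Edges es) else 0)
             | _ \<Rightarrow> 0)
          else 0)
   else (\<lambda>u. 0))"

definition projP ::
  "'v set \<Rightarrow> 'e set \<Rightarrow> ('e \<Rightarrow> 'v) \<Rightarrow> ('e \<Rightarrow> 'v) \<Rightarrow> 'v \<Rightarrow> ('v, 'e) op" where
  "projP V E r s v f = (if f \<in> l2 V E r s then
     (\<lambda>u. if valid_path V E r s u \<and> prange r u = v then f u else 0)
   else (\<lambda>u. 0))"

inductive_set tpoly ::
  "'v set \<Rightarrow> 'e set \<Rightarrow> ('e \<Rightarrow> 'v) \<Rightarrow> ('e \<Rightarrow> 'v) \<Rightarrow> ('v, 'e) op set"
  for V E r s where
  gen_L: "e \<in> E \<Longrightarrow> shiftL V E r s e \<in> tpoly V E r s"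
| gen_P: "v \<in> V \<Longrightarrow> projP V E r s v \<in> tpoly V E r s"
| add: "p \<in> tpoly V E r s \<Longrightarrow> q \<in> tpoly V E r s \<Longrightarrow> (\<lambda>f u. p f u + q f u) \<in> tpoly V E r s"
| smult: "p \<in> tpoly V E r s \<Longrightarrow> (\<lambda>f u. c * p f u) \<in> tpoly V E r s"
| mult: "p \<in> tpoly V E r s \<Longrightarrow> q \<in> tpoly V E r s \<Longrightarrow> p \<circ> q \<in> tpoly V E r s"

text \<open>The tensor algebra: norm closure of tpoly (operators vanishing off l2,
  mapping l2 into l2, approximable in operator norm by elements of tpoly).\<close>

definition tensor_alg ::
  "'v set \<Rightarrow> 'e set \<Rightarrow> ('e \<Rightarrow> 'v) \<Rightarrow> ('e \<Rightarrow> 'v) \<Rightarrow> ('v, 'e) op set" where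
  "tensor_alg V E r s = {T.
     (\<forall>f. f \<notin> l2 V E r s \<longrightarrow> T f = (\<lambda>u. 0)) \<and>
     (\<forall>f\<in>l2 V E r s. T f \<in> l2 V E r s) \<and>
     (\<forall>\<epsilon>>0. \<exists>p\<in>tpoly V E r s. \<forall>f\<in>l2 V E r s.
         l2norm (\<lambda>u. T f u - p f u) \<le> \<epsilon> * l2norm f)}"

definition characters ::
  "'v set \<Rightarrow> 'e set \<Rightarrow> ('e \<Rightarrow> 'v) \<Rightarrow> ('e \<Rightarrow> 'v) \<Rightarrow> (('v, 'e) op \<Rightarrow> complex) set" where
  "characters V E r s = (let A = tensor_alg V E r s in {\<rho>.
     \<rho> \<in> extensional A \<and>
     (\<forall>S\<in>A. \<forall>T\<in>A. \<rho> (\<lambda>f u. S f u + T f u) = \<rho> S + \<rho> T) \<and>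
     (\<forall>c. \<forall>T\<in>A. \<rho> (\<lambda>f u. c * T f u) = c * \<rho> T) \<and>
     (\<forall>S\<in>A. \<forall>T\<in>A. \<rho> (S \<circ> T) = \<rho> S * \<rho> T) \<and>
     (\<exists>T\<in>A. \<rho> T \<noteq> 0)})"

definition characters_at ::
  "'v set \<Rightarrow> 'e set \<Rightarrow> ('e \<Rightarrow> 'v) \<Rightarrow> ('e \<Rightarrow> 'v) \<Rightarrow> 'v \<Rightarrow> (('v, 'e) op \<Rightarrow> complex) set" where
  "characters_at V E r s x = {\<rho> \<in> characters V E r s. \<rho> (projP V E r s x) = 1}"

text \<open>Weak-* topology = topology of pointwise convergence on the algebra.\<close>

definition weak_star_topology ::
  "'v set \<Rightarrow> 'e set \<Rightarrow> ('e \<Rightarrow> 'v) \<Rightarrow> ('e \<Rightarrow> 'v) \<Rightarrow> 'v \<Rightarrow> (('v, 'e) op \<Rightarrow> complex) topology" where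
  "weak_star_topology V E r s x =
     subtopology (product_topology (\<lambda>_. euclidean) (tensor_alg V E r s)) (characters_at V E r s x)"

text \<open>C^n as extensional functions on {..<n} with the product (= Euclidean)
  topology, and its closed unit ball.\<close>

definition closed_unit_ball_n :: "nat \<Rightarrow> (nat \<Rightarrow> complex) set" where
  "closed_unit_ball_n n = {z \<in> PiE {..<n} (\<lambda>_. UNIV). (\<Sum>i<n. (cmod (z i))\<^sup>2) \<le> 1}"

definition ball_topology :: "nat \<Rightarrow> (nat \<Rightarrow> complex) topology" where
  "ball_topology n = subtopology (product_topology (\<lambda>_. euclidean) {..<n}) (closed_unit_ball_n n)"

end

(*
  A character rho with rho(P_x) = 1 kills P_v for v /= x (as P_v P_x = 0) and every L_e that is
  not a loop at x (as L_e = P_(r e) L_e = L_e P_(s e)). Characters are contractive, so rho is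
  determined on the norm-dense algebra generated by the L_e and P_v by lambda_i = rho(L_(e_i)).
  Applying rho to the operator sum_i cnj(lambda_i) L_(e_i), whose norm is (sum_i |lambda_i|^2)^(1/2)
  because the L_(e_i) have orthogonal ranges, shows that lambda lies in the closed unit ball.
  Conversely, every lambda in the open ball is attained, by T |-> <T xi_x, nu> where
  nu = sum_w cnj(lambda^w) xi_w runs over the words w in the loops at x. So phi_x is a continuous
  injection of the compact space of characters into the ball whose image is closed and contains
  the open ball, hence is the whole ball.
*)

theory Submission
  imports Defs
begin

lemma le_zero_if_le_epsilon_mult:
  fixes x K :: real
  assumes "\<And>\<epsilon>. \<epsilon> > 0 \<Longrightarrow> x \<le> \<epsilon> * K" "K \<ge> 0"
  shows "x \<le> 0"
proof (rule field_le_epsilon)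
  fix \<delta> :: real assume "\<delta> > 0"
  then have "\<delta> / (K + 1) > 0" using assms(2) by simp
  then have "x \<le> \<delta> / (K + 1) * K" by (rule assms(1))
  also have "\<dots> \<le> \<delta>" using \<open>\<delta> > 0\<close> assms(2) by (simp add: field_simps)
  finally show "x \<le> 0 + \<delta>" by simp
qed

lemma power2_norm_sum_sparse:
  fixes a :: "'i \<Rightarrow> 'a::real_normed_vector"
  assumes "finite I" "\<And>i j. i \<in> I \<Longrightarrow> j \<in> I \<Longrightarrow> i \<noteq> j \<Longrightarrow> a i = 0 \<or> a j = 0"
  shows "(norm (\<Sum>i\<in>I. a i))\<^sup>2 = (\<Sum>i\<in>I. (norm (a i))\<^sup>2)"
proof (cases "\<exists>i\<in>I. a i \<noteq> 0")
  case True
  then obtain i where i: "i \<in> I" "a i \<noteq> 0" by blast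
  have "a j = 0" if "j \<in> I - {i}" for j using assms(2)[of i j] i that by auto
  then show ?thesis
    using sum.remove[OF assms(1) i(1), of a] sum.remove[OF assms(1) i(1), of "\<lambda>i. (norm (a i))\<^sup>2"]
    by simp
qed simp

lemma le_1_if_le_sqrt:
  fixes q :: real
  assumes "0 \<le> q" "q \<le> sqrt q" shows "q \<le> 1"
proof -
  have "sqrt q \<le> 1"
  proof (rule ccontr)
    assume "\<not> sqrt q \<le> 1"
    then have "sqrt q * 1 < sqrt q * sqrt q" by (intro mult_strict_left_mono) auto
    with assms show False by simp
  qed
  then show ?thesis by simp
qed

lemma sum_power_le:
  fixes c :: real
  assumes "0 \<le> c" "c < 1" shows "(\<Sum>k<M. c ^ k) \<le> 1 / (1 - c)"
  using sum_le_suminf[OF summable_geometric, of c "{..<M}"] assms by (simp add: suminf_geometric)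

section \<open>Square-summable functions\<close>

definition square_summable :: "('a \<Rightarrow> complex) \<Rightarrow> bool" where
  "square_summable f \<longleftrightarrow> (\<lambda>u. (cmod (f u))\<^sup>2) summable_on UNIV"

lemma l2norm_nonneg: "l2norm f \<ge> 0"
  unfolding l2norm_def by (simp add: infsum_nonneg)

lemma power2_l2norm: "(l2norm f)\<^sup>2 = (\<Sum>\<^sub>\<infinity>u. (cmod (f u))\<^sup>2)"
  unfolding l2norm_def by (simp add: infsum_nonneg)

lemma l2norm_zero [simp]: "l2norm (\<lambda>u. 0) = 0"
  unfolding l2norm_def by simp

lemma finite_sum_le_power2_l2norm:
  assumes "square_summable f" "finite F"
  shows "(\<Sum>u\<in>F. (cmod (f u))\<^sup>2) \<le> (l2norm f)\<^sup>2"
  using assms unfolding square_summable_def power2_l2norm by (intro finite_sum_le_infsum) auto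

lemma l2_if_finite_sums_bounded:
  assumes "B \<ge> 0" "\<And>F. finite F \<Longrightarrow> (\<Sum>u\<in>F. (cmod (f u))\<^sup>2) \<le> B\<^sup>2"
  shows "square_summable f" "l2norm f \<le> B"
proof -
  show summable: "square_summable f" unfolding square_summable_def
  proof (rule nonneg_bdd_above_summable_on)
    show "bdd_above (sum (\<lambda>u. (cmod (f u))\<^sup>2) ` {F. F \<subseteq> UNIV \<and> finite F})"
      by (rule bdd_aboveI[of _ "B\<^sup>2"]) (use assms(2) in blast)
  qed simp
  have "(\<Sum>\<^sub>\<infinity>u. (cmod (f u))\<^sup>2) \<le> B\<^sup>2"
    using summable assms unfolding square_summable_def by (intro infsum_le_finite_sums) auto
  then show "l2norm f \<le> B" unfolding l2norm_def by (rule real_le_lsqrt[OF assms(1)])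
qed

lemma norm_le_l2norm:
  assumes "square_summable f" shows "cmod (f u) \<le> l2norm f"
proof -
  have "(cmod (f u))\<^sup>2 \<le> (l2norm f)\<^sup>2" using finite_sum_le_power2_l2norm[OF assms, of "{u}"] by simp
  then show ?thesis using l2norm_nonneg by (rule power2_le_imp_le)
qed

lemma l2norm_le_0_imp_zero:
  assumes "square_summable f" "l2norm f \<le> 0" shows "f = (\<lambda>u. 0)"
  using norm_le_l2norm[OF assms(1)] assms(2) by (intro ext) (meson norm_le_zero_iff order_trans)

lemma square_summable_zero [simp]: "square_summable (\<lambda>u. 0)"
  unfolding square_summable_def by simp

lemma square_summable_add:
  assumes "square_summable f" "square_summable g"
  shows "square_summable (\<lambda>u. f u + g u)"
proof -
  have "(\<lambda>u. 2 * (cmod (f u))\<^sup>2 + 2 * (cmod (g u))\<^sup>2) summable_on UNIV"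
    using assms unfolding square_summable_def by (intro summable_on_add summable_on_cmult_right)
  moreover have "(cmod (f u + g u))\<^sup>2 \<le> 2 * (cmod (f u))\<^sup>2 + 2 * (cmod (g u))\<^sup>2" for u
  proof -
    have "(cmod (f u + g u))\<^sup>2 \<le> (cmod (f u) + cmod (g u))\<^sup>2"
      by (simp add: norm_triangle_ineq power_mono)
    also have "\<dots> \<le> 2 * (cmod (f u))\<^sup>2 + 2 * (cmod (g u))\<^sup>2"
      using zero_le_power2[of "cmod (f u) - cmod (g u)"] unfolding power2_sum power2_diff
      by linarith
    finally show ?thesis .
  qed
  ultimately show ?thesis unfolding square_summable_def
    by (rule summable_on_comparison_test) auto
qed

lemma square_summable_cmult: "square_summable f \<Longrightarrow> square_summable (\<lambda>u. c * f u)"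
  unfolding square_summable_def
  by (drule summable_on_cmult_right[of _ _ "(cmod c)\<^sup>2"]) (simp add: norm_mult power_mult_distrib)

lemma square_summable_diff:
  "square_summable f \<Longrightarrow> square_summable g \<Longrightarrow> square_summable (\<lambda>u. f u - g u)"
  using square_summable_add[of f "\<lambda>u. (-1) * g u"] square_summable_cmult[of g "-1"] by simp

lemma square_summable_sum:
  "finite I \<Longrightarrow> (\<And>i. i \<in> I \<Longrightarrow> square_summable (g i)) \<Longrightarrow>
    square_summable (\<lambda>u. \<Sum>i\<in>I. g i u)"
  by (induction I rule: finite_induct) (auto intro: square_summable_add)

lemma l2norm_cmult: "l2norm (\<lambda>u. c * f u) = cmod c * l2norm f"
proof -
  have "(\<Sum>\<^sub>\<infinity>u. (cmod (c * f u))\<^sup>2) = (cmod c)\<^sup>2 * (\<Sum>\<^sub>\<infinity>u. (cmod (f u))\<^sup>2)"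
    by (simp add: norm_mult power_mult_distrib infsum_cmult_right')
  then show ?thesis unfolding l2norm_def by (simp add: real_sqrt_mult)
qed

lemma l2norm_triangle:
  fixes f g :: "('v, 'e) vec"
  assumes "square_summable f" "square_summable g"
  shows "l2norm (\<lambda>u. f u + g u) \<le> l2norm f + l2norm g"
proof (rule l2_if_finite_sums_bounded(2))
  show "0 \<le> l2norm f + l2norm g" by (simp add: l2norm_nonneg add_nonneg_nonneg)
  fix F :: "('v, 'e) gpath set" assume F: "finite F"
  have L2_set_le: "L2_set (\<lambda>u. cmod (h u)) F \<le> l2norm h" if "square_summable h" for h :: "('v, 'e) vec"
    unfolding L2_set_def by (rule real_le_lsqrt[OF l2norm_nonneg finite_sum_le_power2_l2norm[OF that F]])
  have "L2_set (\<lambda>u. cmod (f u + g u)) F \<le> L2_set (\<lambda>u. cmod (f u) + cmod (g u)) F"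
    by (rule L2_set_mono) (auto simp: norm_triangle_ineq)
  also have "\<dots> \<le> L2_set (\<lambda>u. cmod (f u)) F + L2_set (\<lambda>u. cmod (g u)) F"
    by (rule L2_set_triangle_ineq)
  also have "\<dots> \<le> l2norm f + l2norm g"
    using assms by (intro add_mono L2_set_le)
  finally have "(L2_set (\<lambda>u. cmod (f u + g u)) F)\<^sup>2 \<le> (l2norm f + l2norm g)\<^sup>2"
    by (simp add: L2_set_nonneg power_mono)
  then show "(\<Sum>u\<in>F. (cmod (f u + g u))\<^sup>2) \<le> (l2norm f + l2norm g)\<^sup>2"
    by (simp add: L2_set_def sum_nonneg)
qed

lemma l2norm_diff_le:
  fixes f g :: "('v, 'e) vec"
  assumes "square_summable f" "square_summable g"
  shows "l2norm (\<lambda>u. f u - g u) \<le> l2norm f + l2norm g"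
  using l2norm_triangle[OF assms(1) square_summable_cmult[OF assms(2)], of "-1"]
    l2norm_cmult[of "-1" g] by simp

lemma l2norm_diff_triangle:
  fixes f g h :: "('v, 'e) vec"
  assumes "square_summable f" "square_summable g" "square_summable h"
  shows "l2norm (\<lambda>u. f u - h u) \<le> l2norm (\<lambda>u. f u - g u) + l2norm (\<lambda>u. g u - h u)"
  using l2norm_triangle[OF square_summable_diff[OF assms(1,2)] square_summable_diff[OF assms(2,3)]]
  by simp

lemma l2norm_sum_le:
  fixes g :: "'i \<Rightarrow> ('v, 'e) vec"
  assumes "finite I" "\<And>i. i \<in> I \<Longrightarrow> square_summable (g i)"
  shows "l2norm (\<lambda>u. \<Sum>i\<in>I. g i u) \<le> (\<Sum>i\<in>I. l2norm (g i))"
  using assms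
proof (induction I rule: finite_induct)
  case (insert i I)
  have "l2norm (\<lambda>u. \<Sum>j\<in>insert i I. g j u) \<le> l2norm (g i) + l2norm (\<lambda>u. \<Sum>j\<in>I. g j u)"
    using insert by (simp add: l2norm_triangle square_summable_sum)
  with insert show ?case by simp
qed simp

lemma l2_pointwise_limit:
  fixes g :: "nat \<Rightarrow> ('v, 'e) vec"
  assumes lim: "\<And>u. (\<lambda>k. g k u) \<longlonglongrightarrow> h u"
    and bound: "\<And>k. square_summable (g k)" "\<And>k. l2norm (g k) \<le> B"
  shows "square_summable h" "l2norm h \<le> B"
proof -
  have B: "B \<ge> 0" using bound(2)[of 0] l2norm_nonneg order_trans by blast
  have "(\<Sum>u\<in>F. (cmod (h u))\<^sup>2) \<le> B\<^sup>2" if F: "finite F" for F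
  proof (rule tendsto_upperbound)
    show "(\<lambda>k. \<Sum>u\<in>F. (cmod (g k u))\<^sup>2) \<longlonglongrightarrow> (\<Sum>u\<in>F. (cmod (h u))\<^sup>2)"
      by (intro tendsto_sum tendsto_power tendsto_norm lim)
    have "(\<Sum>u\<in>F. (cmod (g k u))\<^sup>2) \<le> B\<^sup>2" for k
      using finite_sum_le_power2_l2norm[OF bound(1) F, of k] bound(2)[of k]
        power_mono[OF _ l2norm_nonneg] by (meson order_trans)
    then show "\<forall>\<^sub>F k in sequentially. (\<Sum>u\<in>F. (cmod (g k u))\<^sup>2) \<le> B\<^sup>2" by simp
  qed simp
  then show "square_summable h" "l2norm h \<le> B" using l2_if_finite_sums_bounded[OF B] by auto
qed

lemma l2_geometric_series:
  fixes g :: "nat \<Rightarrow> ('v, 'e) vec"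
  assumes g: "\<And>k. square_summable (g k)" "\<And>k. l2norm (g k) \<le> B * c ^ k"
    and c: "0 \<le> c" "c < 1"
  shows "summable (\<lambda>k. g k u)"
    and "square_summable (\<lambda>u. (\<Sum>k. g k u) - (\<Sum>k<N. g k u))"
    and "l2norm (\<lambda>u. (\<Sum>k. g k u) - (\<Sum>k<N. g k u)) \<le> B * c ^ N / (1 - c)"
proof -
  have B: "B \<ge> 0" using g(2)[of 0] l2norm_nonneg[of "g 0"] by simp
  show summable: "summable (\<lambda>k. g k u)" for u
  proof (rule summable_comparison_test)
    show "\<exists>N. \<forall>k\<ge>N. norm (g k u) \<le> B * c ^ k"
      using norm_le_l2norm[OF g(1)] g(2) order_trans by blast
    show "summable (\<lambda>k. B * c ^ k)" using c by (simp add: summable_mult summable_geometric)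
  qed
  define partial where "partial M u = (\<Sum>k<M. g (k + N) u)" for M u
  have lim: "(\<lambda>M. partial M u) \<longlonglongrightarrow> (\<Sum>k. g k u) - (\<Sum>k<N. g k u)" for u
    unfolding partial_def suminf_split_initial_segment[OF summable, of u N]
    by (simp add: summable_LIMSEQ summable_ignore_initial_segment[OF summable])
  have partial_l2: "square_summable (partial M)" for M
    unfolding partial_def by (rule square_summable_sum) (auto simp: g)
  have partial_bound: "l2norm (partial M) \<le> B * c ^ N / (1 - c)" for M
  proof -
    have "l2norm (partial M) \<le> (\<Sum>k<M. l2norm (g (k + N)))"
      unfolding partial_def by (intro l2norm_sum_le g) simp
    also have "\<dots> \<le> (\<Sum>k<M. B * c ^ N * c ^ k)"
    proof (rule sum_mono)
      fix k show "l2norm (g (k + N)) \<le> B * c ^ N * c ^ k"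
        using g(2)[of "k + N"] by (simp add: power_add mult_ac)
    qed
    also have "\<dots> = B * c ^ N * (\<Sum>k<M. c ^ k)" by (simp add: sum_distrib_left)
    also have "\<dots> \<le> B * c ^ N * (1 / (1 - c))"
      using B c by (intro mult_left_mono sum_power_le) auto
    finally show ?thesis by simp
  qed
  show "square_summable (\<lambda>u. (\<Sum>k. g k u) - (\<Sum>k<N. g k u))"
    by (rule l2_pointwise_limit(1)[OF lim partial_l2 partial_bound])
  show "l2norm (\<lambda>u. (\<Sum>k. g k u) - (\<Sum>k<N. g k u)) \<le> B * c ^ N / (1 - c)"
    by (rule l2_pointwise_limit(2)[OF lim partial_l2 partial_bound])
qed

lemma l2_dominated_by_injection:
  fixes f g :: "('v, 'e) vec"
  assumes "square_summable f" "inj_on h {u. g u \<noteq> 0}"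
    and "\<And>u. g u \<noteq> 0 \<Longrightarrow> cmod (g u) \<le> cmod (f (h u))"
  shows "square_summable g" "l2norm g \<le> l2norm f"
proof -
  have sums: "(\<Sum>u\<in>F. (cmod (g u))\<^sup>2) \<le> (l2norm f)\<^sup>2" if F: "finite F" for F
  proof -
    let ?S = "{u\<in>F. g u \<noteq> 0}"
    have "(\<Sum>u\<in>F. (cmod (g u))\<^sup>2) = (\<Sum>u\<in>?S. (cmod (g u))\<^sup>2)"
      using F by (intro sum.mono_neutral_right) auto
    also have "\<dots> \<le> (\<Sum>u\<in>?S. (cmod (f (h u)))\<^sup>2)"
      using assms(3) by (intro sum_mono power_mono) auto
    also have "\<dots> = (\<Sum>w\<in>h ` ?S. (cmod (f w))\<^sup>2)"
      using assms(2) by (subst sum.reindex) (auto intro: inj_on_subset)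
    also have "\<dots> \<le> (l2norm f)\<^sup>2"
      using finite_sum_le_power2_l2norm[OF assms(1)] F by simp
    finally show ?thesis .
  qed
  show "square_summable g" by (rule l2_if_finite_sums_bounded(1)[OF l2norm_nonneg sums])
  show "l2norm g \<le> l2norm f" by (rule l2_if_finite_sums_bounded(2)[OF l2norm_nonneg sums])
qed

section \<open>Bounded operators on the path space\<close>

locale digraph =
  fixes V :: "'v set" and E :: "'e set" and r s :: "'e \<Rightarrow> 'v"
  assumes edge_ends: "\<And>e. e \<in> E \<Longrightarrow> r e \<in> V \<and> s e \<in> V"
begin

abbreviation "H \<equiv> l2 V E r s"
abbreviation "valid \<equiv> valid_path V E r s"
abbreviation "L \<equiv> shiftL V E r s"
abbreviation "P \<equiv> projP V E r s"
abbreviation "A0 \<equiv> tpoly V E r s"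
abbreviation "A \<equiv> tensor_alg V E r s"

lemma l2_iff: "f \<in> H \<longleftrightarrow> (\<forall>u. \<not> valid u \<longrightarrow> f u = 0) \<and> square_summable f"
  unfolding l2_def square_summable_def by auto

lemma l2_square_summable: "f \<in> H \<Longrightarrow> square_summable f"
  by (simp add: l2_iff)

lemma l2_zero: "(\<lambda>u. 0) \<in> H"
  by (simp add: l2_iff)

lemma l2_add: "f \<in> H \<Longrightarrow> g \<in> H \<Longrightarrow> (\<lambda>u. f u + g u) \<in> H"
  by (simp add: l2_iff square_summable_add)

lemma l2_cmult: "f \<in> H \<Longrightarrow> (\<lambda>u. c * f u) \<in> H"
  by (simp add: l2_iff square_summable_cmult)

lemma l2_diff: "f \<in> H \<Longrightarrow> g \<in> H \<Longrightarrow> (\<lambda>u. f u - g u) \<in> H"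
  by (simp add: l2_iff square_summable_diff)

lemma l2_sum: "finite I \<Longrightarrow> (\<And>i. i \<in> I \<Longrightarrow> g i \<in> H) \<Longrightarrow> (\<lambda>u. \<Sum>i\<in>I. g i u) \<in> H"
  by (induction I rule: finite_induct) (auto intro: l2_zero l2_add)

definition bounded_op :: "('v, 'e) op \<Rightarrow> bool" where
  "bounded_op T \<longleftrightarrow> (\<forall>f. f \<notin> H \<longrightarrow> T f = (\<lambda>u. 0)) \<and> (\<forall>f\<in>H. T f \<in> H) \<and>
     (\<forall>f\<in>H. \<forall>g\<in>H. T (\<lambda>u. f u + g u) = (\<lambda>u. T f u + T g u)) \<and>
     (\<forall>c. \<forall>f\<in>H. T (\<lambda>u. c * f u) = (\<lambda>u. c * T f u)) \<and>
     (\<exists>C\<ge>0. \<forall>f\<in>H. l2norm (T f) \<le> C * l2norm f)"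

lemma bounded_opI:
  assumes "\<And>f. f \<notin> H \<Longrightarrow> T f = (\<lambda>u. 0)" "\<And>f. f \<in> H \<Longrightarrow> T f \<in> H"
    and "\<And>f g. f \<in> H \<Longrightarrow> g \<in> H \<Longrightarrow> T (\<lambda>u. f u + g u) = (\<lambda>u. T f u + T g u)"
    and "\<And>c f. f \<in> H \<Longrightarrow> T (\<lambda>u. c * f u) = (\<lambda>u. c * T f u)"
    and "C \<ge> 0" "\<And>f. f \<in> H \<Longrightarrow> l2norm (T f) \<le> C * l2norm f"
  shows "bounded_op T"
  unfolding bounded_op_def using assms by blast

lemma bounded_op_vanishes: "bounded_op T \<Longrightarrow> f \<notin> H \<Longrightarrow> T f = (\<lambda>u. 0)"
  by (simp add: bounded_op_def)

lemma bounded_op_l2: "bounded_op T \<Longrightarrow> f \<in> H \<Longrightarrow> T f \<in> H"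
  by (simp add: bounded_op_def)

lemma bounded_op_add:
  "bounded_op T \<Longrightarrow> f \<in> H \<Longrightarrow> g \<in> H \<Longrightarrow> T (\<lambda>u. f u + g u) = (\<lambda>u. T f u + T g u)"
  by (simp add: bounded_op_def)

lemma bounded_op_cmult: "bounded_op T \<Longrightarrow> f \<in> H \<Longrightarrow> T (\<lambda>u. c * f u) = (\<lambda>u. c * T f u)"
  by (simp add: bounded_op_def)

lemma bounded_op_bound: "bounded_op T \<Longrightarrow> \<exists>C\<ge>0. \<forall>f\<in>H. l2norm (T f) \<le> C * l2norm f"
  by (simp add: bounded_op_def)

lemma bounded_op_zero: "bounded_op T \<Longrightarrow> T (\<lambda>u. 0) = (\<lambda>u. 0)"
  using bounded_op_cmult[OF _ l2_zero, of T 0] by simp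

lemma bounded_op_diff:
  assumes "bounded_op T" "f \<in> H" "g \<in> H"
  shows "T (\<lambda>u. f u - g u) = (\<lambda>u. T f u - T g u)"
  using bounded_op_add[OF assms(1,2) l2_cmult[OF assms(3)], of "-1"]
    bounded_op_cmult[OF assms(1,3), of "-1"] by simp

lemma bounded_op_sum:
  fixes g :: "nat \<Rightarrow> ('v, 'e) vec"
  assumes "bounded_op T" "\<And>k. g k \<in> H"
  shows "T (\<lambda>u. \<Sum>k<N. g k u) = (\<lambda>u. \<Sum>k<N. T (g k) u)"
proof (induction N)
  case 0 then show ?case using bounded_op_zero[OF assms(1)] by simp
next
  case (Suc N)
  have "(\<lambda>u. \<Sum>k<N. g k u) \<in> H" by (rule l2_sum) (auto simp: assms(2))
  then have "T (\<lambda>u. (\<Sum>k<N. g k u) + g N u) = (\<lambda>u. T (\<lambda>u. \<Sum>k<N. g k u) u + T (g N) u)"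
    by (rule bounded_op_add[OF assms(1) _ assms(2)])
  then show ?case by (simp add: Suc.IH)
qed

lemma bounded_op_plus:
  assumes S: "bounded_op S" and T: "bounded_op T"
  shows "bounded_op (\<lambda>f u. S f u + T f u)"
proof -
  obtain C1 where C1: "C1 \<ge> 0" "\<forall>f\<in>H. l2norm (S f) \<le> C1 * l2norm f"
    using bounded_op_bound[OF S] by blast
  obtain C2 where C2: "C2 \<ge> 0" "\<forall>f\<in>H. l2norm (T f) \<le> C2 * l2norm f"
    using bounded_op_bound[OF T] by blast
  show ?thesis
  proof (rule bounded_opI[where C = "C1 + C2"])
    fix f assume f: "f \<in> H"
    then show "(\<lambda>u. S f u + T f u) \<in> H"
      by (intro l2_add bounded_op_l2[OF S f] bounded_op_l2[OF T f])
    have "l2norm (\<lambda>u. S f u + T f u) \<le> l2norm (S f) + l2norm (T f)"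
      by (intro l2norm_triangle l2_square_summable bounded_op_l2[OF S f] bounded_op_l2[OF T f])
    also have "\<dots> \<le> (C1 + C2) * l2norm f" using C1 C2 f by (simp add: distrib_right add_mono)
    finally show "l2norm (\<lambda>u. S f u + T f u) \<le> (C1 + C2) * l2norm f" .
  next
    fix f g assume "f \<in> H" "g \<in> H"
    then show "(\<lambda>u. S (\<lambda>u. f u + g u) u + T (\<lambda>u. f u + g u) u)
        = (\<lambda>u. (S f u + T f u) + (S g u + T g u))"
      by (simp add: bounded_op_add[OF S] bounded_op_add[OF T] algebra_simps)
  next
    fix c f assume "f \<in> H"
    then show "(\<lambda>u. S (\<lambda>u. c * f u) u + T (\<lambda>u. c * f u) u) = (\<lambda>u. c * (S f u + T f u))"
      by (simp add: bounded_op_cmult[OF S] bounded_op_cmult[OF T] algebra_simps)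
  next
    fix f assume "f \<notin> H"
    then show "(\<lambda>u. S f u + T f u) = (\<lambda>u. 0)"
      by (simp add: bounded_op_vanishes[OF S] bounded_op_vanishes[OF T])
  qed (use C1 C2 in simp)
qed

lemma bounded_op_scale:
  assumes T: "bounded_op T" shows "bounded_op (\<lambda>f u. c * T f u)"
proof -
  obtain C where C: "C \<ge> 0" "\<forall>f\<in>H. l2norm (T f) \<le> C * l2norm f"
    using bounded_op_bound[OF T] by blast
  show ?thesis
  proof (rule bounded_opI[where C = "cmod c * C"])
    fix f assume f: "f \<in> H"
    then show "(\<lambda>u. c * T f u) \<in> H" by (intro l2_cmult bounded_op_l2[OF T f])
    show "l2norm (\<lambda>u. c * T f u) \<le> cmod c * C * l2norm f"
      using C f by (simp add: l2norm_cmult mult.assoc mult_left_mono)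
  next
    fix f g assume "f \<in> H" "g \<in> H"
    then show "(\<lambda>u. c * T (\<lambda>u. f u + g u) u) = (\<lambda>u. c * T f u + c * T g u)"
      by (simp add: bounded_op_add[OF T] distrib_left)
  next
    fix d f assume "f \<in> H"
    then show "(\<lambda>u. c * T (\<lambda>u. d * f u) u) = (\<lambda>u. d * (c * T f u))"
      by (simp add: bounded_op_cmult[OF T] mult.left_commute)
  next
    fix f assume "f \<notin> H"
    then show "(\<lambda>u. c * T f u) = (\<lambda>u. 0)" by (simp add: bounded_op_vanishes[OF T])
  qed (use C in simp)
qed

lemma bounded_op_comp:
  assumes S: "bounded_op S" and T: "bounded_op T" shows "bounded_op (S \<circ> T)"
proof -
  obtain C1 where C1: "C1 \<ge> 0" "\<forall>f\<in>H. l2norm (S f) \<le> C1 * l2norm f"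
    using bounded_op_bound[OF S] by blast
  obtain C2 where C2: "C2 \<ge> 0" "\<forall>f\<in>H. l2norm (T f) \<le> C2 * l2norm f"
    using bounded_op_bound[OF T] by blast
  show ?thesis
  proof (rule bounded_opI[where C = "C1 * C2"])
    fix f assume f: "f \<in> H"
    have "l2norm (S (T f)) \<le> C1 * l2norm (T f)" using C1 bounded_op_l2[OF T f] by blast
    also have "\<dots> \<le> C1 * (C2 * l2norm f)" using C1 C2 f by (intro mult_left_mono) auto
    finally show "l2norm ((S \<circ> T) f) \<le> C1 * C2 * l2norm f" by (simp add: mult.assoc)
  next
    fix f g assume "f \<in> H" "g \<in> H"
    then show "(S \<circ> T) (\<lambda>u. f u + g u) = (\<lambda>u. (S \<circ> T) f u + (S \<circ> T) g u)"
      by (simp add: bounded_op_add[OF S] bounded_op_add[OF T] bounded_op_l2[OF T])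
  next
    fix c f assume "f \<in> H"
    then show "(S \<circ> T) (\<lambda>u. c * f u) = (\<lambda>u. c * (S \<circ> T) f u)"
      by (simp add: bounded_op_cmult[OF S] bounded_op_cmult[OF T] bounded_op_l2[OF T])
  next
    fix f assume "f \<in> H"
    then show "(S \<circ> T) f \<in> H" by (simp add: bounded_op_l2[OF S] bounded_op_l2[OF T])
  next
    fix f assume "f \<notin> H"
    then show "(S \<circ> T) f = (\<lambda>u. 0)"
      by (simp add: bounded_op_vanishes[OF T] bounded_op_zero[OF S])
  qed (use C1 C2 in simp)
qed

lemma L_apply: "f \<in> H \<Longrightarrow> L e f u = (if valid u then (case u of Edges (e' # es) \<Rightarrow>
    (if e' = e then f (if es = [] then Vtx (s e) else Edges es) else 0) | _ \<Rightarrow> 0) else 0)"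
  by (simp add: shiftL_def)

lemma L_vanishes: "f \<notin> H \<Longrightarrow> L e f = (\<lambda>u. 0)"
  by (simp add: shiftL_def)

lemma P_apply: "f \<in> H \<Longrightarrow> P v f u = (if valid u \<and> prange r u = v then f u else 0)"
  by (simp add: projP_def)

lemma P_vanishes: "f \<notin> H \<Longrightarrow> P v f = (\<lambda>u. 0)"
  by (simp add: projP_def)

definition tail_path :: "'e \<Rightarrow> 'e list \<Rightarrow> ('v, 'e) gpath" where
  "tail_path e es = (if es = [] then Vtx (s e) else Edges es)"

lemma valid_tail_path:
  assumes "valid (Edges (e # es))"
  shows "valid (tail_path e es)" "prange r (tail_path e es) = s e"
proof -
  have e: "e \<in> E" "set es \<subseteq> E"
    and chain: "\<And>i. Suc i < length (e # es) \<Longrightarrow> s ((e # es) ! i) = r ((e # es) ! Suc i)"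
    using assms by (auto simp: valid_path_def)
  show "valid (tail_path e es)"
  proof (cases es)
    case Nil then show ?thesis using edge_ends[OF e(1)] by (simp add: tail_path_def valid_path_def)
  next
    case (Cons e2 es2)
    have "s (es ! i) = r (es ! Suc i)" if "Suc i < length es" for i
      using chain[of "Suc i"] that by simp
    then show ?thesis using e(2) Cons by (auto simp: tail_path_def valid_path_def)
  qed
  show "prange r (tail_path e es) = s e"
    using chain[of 0] by (cases es) (auto simp: tail_path_def)
qed

lemma L_apply_tail:
  "f \<in> H \<Longrightarrow> L e f u = (case u of Edges (e' # es) \<Rightarrow>
     (if e' = e \<and> valid u then f (tail_path e es) else 0) | _ \<Rightarrow> 0)"
  by (auto simp: L_apply tail_path_def split: gpath.split list.split)

lemma L_nonzero: "L e f u \<noteq> 0 \<Longrightarrow> \<exists>es. u = Edges (e # es) \<and> valid u"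
  by (cases "f \<in> H") (auto simp: L_apply_tail L_vanishes split: gpath.splits list.splits if_splits)

lemma L_contraction:
  assumes f: "f \<in> H" shows "L e f \<in> H" "l2norm (L e f) \<le> l2norm f"
proof -
  define tail where "tail u = (case u of Edges (_ # es) \<Rightarrow> tail_path e es | _ \<Rightarrow> u)" for u
  have "inj_on tail {u. L e f u \<noteq> 0}"
    by (rule inj_onI) (auto dest!: L_nonzero simp: tail_def tail_path_def split: if_splits)
  moreover have "cmod (L e f u) \<le> cmod (f (tail u))" if "L e f u \<noteq> 0" for u
    using L_nonzero[OF that] by (auto simp: L_apply_tail[OF f] tail_def)
  ultimately have "square_summable (L e f)" "l2norm (L e f) \<le> l2norm f"
    using l2_dominated_by_injection[OF l2_square_summable[OF f]] by blast+
  then show "L e f \<in> H" "l2norm (L e f) \<le> l2norm f"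
    by (auto simp: l2_iff L_apply[OF f])
qed

lemma bounded_op_L: "bounded_op (L e)"
proof (rule bounded_opI[where C = 1])
  fix f g assume "f \<in> H" "g \<in> H"
  then show "L e (\<lambda>u. f u + g u) = (\<lambda>u. L e f u + L e g u)"
    using l2_add[of f g] by (auto simp: L_apply split: gpath.splits list.splits)
next
  fix c f assume "f \<in> H"
  then show "L e (\<lambda>u. c * f u) = (\<lambda>u. c * L e f u)"
    using l2_cmult[of f c] by (auto simp: L_apply split: gpath.splits list.splits)
qed (auto simp: L_vanishes L_contraction)

lemma bounded_op_P: "bounded_op (P v)"
proof (rule bounded_opI[where C = 1])
  fix f assume f: "f \<in> H"
  have "square_summable (P v f)" "l2norm (P v f) \<le> l2norm f"
    by (rule l2_dominated_by_injection[OF l2_square_summable[OF f], of id]; simp add: P_apply[OF f])+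
  then show "P v f \<in> H" "l2norm (P v f) \<le> 1 * l2norm f"
    by (auto simp: l2_iff P_apply[OF f])
next
  fix f g assume "f \<in> H" "g \<in> H"
  then show "P v (\<lambda>u. f u + g u) = (\<lambda>u. P v f u + P v g u)"
    using l2_add[of f g] by (auto simp: P_apply)
next
  fix c f assume "f \<in> H"
  then show "P v (\<lambda>u. c * f u) = (\<lambda>u. c * P v f u)"
    using l2_cmult[of f c] by (auto simp: P_apply)
qed (auto simp: P_vanishes)

lemma bounded_op_A0: "p \<in> A0 \<Longrightarrow> bounded_op p"
proof (induction rule: tpoly.induct)
  case (mult p q) then show ?case using bounded_op_comp by (simp add: comp_def)
qed (auto intro: bounded_op_L bounded_op_P bounded_op_plus bounded_op_scale)

lemma P_orthogonal:
  assumes "v \<noteq> w" shows "P v \<circ> P w = (\<lambda>f u. 0)"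
proof (intro ext)
  fix f u
  show "(P v \<circ> P w) f u = 0"
  proof (cases "f \<in> H")
    case True
    then show ?thesis using bounded_op_l2[OF bounded_op_P True] assms by (simp add: P_apply)
  next
    case False
    then show ?thesis using bounded_op_zero[OF bounded_op_P] by (simp add: P_vanishes)
  qed
qed

lemma P_range_L: "P (r e) \<circ> L e = L e"
proof (intro ext)
  fix f u
  show "(P (r e) \<circ> L e) f u = L e f u"
  proof (cases "f \<in> H")
    case True
    then have "L e f \<in> H" by (rule bounded_op_l2[OF bounded_op_L])
    then show ?thesis by (cases "L e f u = 0") (auto simp: P_apply dest!: L_nonzero)
  next
    case False
    then show ?thesis using bounded_op_zero[OF bounded_op_P] by (simp add: L_vanishes)
  qed
qed

lemma L_source_P: "L e \<circ> P (s e) = L e"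
proof (intro ext)
  fix f u
  show "(L e \<circ> P (s e)) f u = L e f u"
  proof (cases "f \<in> H")
    case True
    then have Pf: "P (s e) f \<in> H" by (rule bounded_op_l2[OF bounded_op_P])
    show ?thesis
    proof (cases "\<exists>es. u = Edges (e # es) \<and> valid u")
      case True
      then obtain es where "u = Edges (e # es)" "valid u" by blast
      then show ?thesis using valid_tail_path[of e es] Pf \<open>f \<in> H\<close>
        by (simp add: L_apply_tail P_apply)
    next
      case False
      then show ?thesis using L_nonzero by (metis comp_apply)
    qed
  next
    case False
    then show ?thesis using bounded_op_zero[OF bounded_op_L] by (simp add: L_vanishes P_vanishes)
  qed
qed

lemma l2norm_sum_shifts_le:
  fixes d :: "'i \<Rightarrow> 'e" and c :: "'i \<Rightarrow> complex"
  assumes I: "finite I" "inj_on d I" and f: "f \<in> H"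
  shows "l2norm (\<lambda>u. \<Sum>i\<in>I. c i * L (d i) f u) \<le> sqrt (\<Sum>i\<in>I. (cmod (c i))\<^sup>2) * l2norm f"
proof (rule l2_if_finite_sums_bounded(2))
  define Q where "Q = (\<Sum>i\<in>I. (cmod (c i))\<^sup>2)"
  have Q: "Q \<ge> 0" by (simp add: Q_def sum_nonneg)
  then show "0 \<le> sqrt (\<Sum>i\<in>I. (cmod (c i))\<^sup>2) * l2norm f" by (simp add: Q_def l2norm_nonneg)
  fix F :: "('v, 'e) gpath set" assume F: "finite F"
  have pointwise: "(cmod (\<Sum>i\<in>I. c i * L (d i) f u))\<^sup>2 = (\<Sum>i\<in>I. (cmod (c i))\<^sup>2 * (cmod (L (d i) f u))\<^sup>2)"
    for u
  proof -
    have "L (d i) f u = 0 \<or> L (d j) f u = 0" if "i \<in> I" "j \<in> I" "i \<noteq> j" for i j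
      using L_nonzero[of "d i" f u] L_nonzero[of "d j" f u] I(2) that by (auto dest: inj_onD)
    then have "(cmod (\<Sum>i\<in>I. c i * L (d i) f u))\<^sup>2 = (\<Sum>i\<in>I. (cmod (c i * L (d i) f u))\<^sup>2)"
      by (intro power2_norm_sum_sparse I(1)) auto
    then show ?thesis by (simp add: norm_mult power_mult_distrib)
  qed
  have "(\<Sum>u\<in>F. (cmod (\<Sum>i\<in>I. c i * L (d i) f u))\<^sup>2)
      = (\<Sum>i\<in>I. (cmod (c i))\<^sup>2 * (\<Sum>u\<in>F. (cmod (L (d i) f u))\<^sup>2))"
    unfolding pointwise by (simp add: sum.swap[of _ F] sum_distrib_left)
  also have "\<dots> \<le> (\<Sum>i\<in>I. (cmod (c i))\<^sup>2 * (l2norm f)\<^sup>2)"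
  proof (intro sum_mono mult_left_mono)
    fix i
    have "(\<Sum>u\<in>F. (cmod (L (d i) f u))\<^sup>2) \<le> (l2norm (L (d i) f))\<^sup>2"
      by (rule finite_sum_le_power2_l2norm[OF l2_square_summable[OF L_contraction(1)[OF f]] F])
    also have "\<dots> \<le> (l2norm f)\<^sup>2"
      using L_contraction(2)[OF f] by (intro power_mono l2norm_nonneg)
    finally show "(\<Sum>u\<in>F. (cmod (L (d i) f u))\<^sup>2) \<le> (l2norm f)\<^sup>2" .
  qed simp
  also have "\<dots> = (sqrt Q * l2norm f)\<^sup>2"
    using Q by (simp add: Q_def sum_distrib_right power_mult_distrib)
  finally show "(\<Sum>u\<in>F. (cmod (\<Sum>i\<in>I. c i * L (d i) f u))\<^sup>2)
      \<le> (sqrt (\<Sum>i\<in>I. (cmod (c i))\<^sup>2) * l2norm f)\<^sup>2"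
    by (simp add: Q_def)
qed

lemma l2_suminf:
  fixes g :: "nat \<Rightarrow> ('v, 'e) vec"
  assumes g: "\<And>k. g k \<in> H" "\<And>k. l2norm (g k) \<le> B * c ^ k" and c: "0 \<le> c" "c < 1"
  shows "(\<lambda>u. \<Sum>k. g k u) \<in> H"
proof -
  have "square_summable (\<lambda>u. (\<Sum>k. g k u) - (\<Sum>k<0. g k u))"
    using l2_geometric_series(2)[OF l2_square_summable[OF g(1)] g(2) c] .
  moreover have "(\<Sum>k. g k u) = 0" if "\<not> valid u" for u
    using g(1) that by (simp add: l2_iff)
  ultimately show ?thesis by (simp add: l2_iff)
qed

lemma bounded_op_suminf:
  fixes g :: "nat \<Rightarrow> ('v, 'e) vec"
  assumes U: "bounded_op U"
    and g: "\<And>k. g k \<in> H" "\<And>k. l2norm (g k) \<le> B * c ^ k" and c: "0 \<le> c" "c < 1"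
  shows "U (\<lambda>u. \<Sum>k. g k u) u = (\<Sum>k. U (g k) u)"
proof -
  obtain C where C: "C \<ge> 0" "\<forall>f\<in>H. l2norm (U f) \<le> C * l2norm f"
    using bounded_op_bound[OF U] by blast
  define S where "S = (\<lambda>u. \<Sum>k. g k u)"
  define partial where "partial N = (\<lambda>u. \<Sum>k<N. g k u)" for N
  have S: "S \<in> H" unfolding S_def by (rule l2_suminf[OF g c])
  have partial: "partial N \<in> H" for N unfolding partial_def by (rule l2_sum) (auto simp: g)
  have "(\<lambda>N. U S u - U (partial N) u) \<longlonglongrightarrow> 0"
  proof (rule Lim_null_comparison)
    have "norm (U S u - U (partial N) u) \<le> C * (B * c ^ N / (1 - c))" for N
    proof -
      have tail: "(\<lambda>u. S u - partial N u) \<in> H" by (rule l2_diff[OF S partial])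
      have "norm (U S u - U (partial N) u) = norm (U (\<lambda>u. S u - partial N u) u)"
        by (simp add: bounded_op_diff[OF U S partial])
      also have "\<dots> \<le> l2norm (U (\<lambda>u. S u - partial N u))"
        by (rule norm_le_l2norm[OF l2_square_summable[OF bounded_op_l2[OF U tail]]])
      also have "\<dots> \<le> C * l2norm (\<lambda>u. S u - partial N u)" using C tail by blast
      also have "\<dots> \<le> C * (B * c ^ N / (1 - c))"
        using l2_geometric_series(3)[OF l2_square_summable[OF g(1)] g(2) c] C(1)
        unfolding S_def partial_def by (intro mult_left_mono) auto
      finally show ?thesis .
    qed
    then show "\<forall>\<^sub>F N in sequentially. norm (U S u - U (partial N) u) \<le> C * (B * c ^ N / (1 - c))"
      by simp
    show "(\<lambda>N. C * (B * c ^ N / (1 - c))) \<longlonglongrightarrow> 0"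
      using c by (auto intro!: tendsto_mult_right_zero tendsto_divide_zero LIMSEQ_power_zero)
  qed
  then have "(\<lambda>N. U S u - (U S u - U (partial N) u)) \<longlonglongrightarrow> U S u - 0"
    by (intro tendsto_diff tendsto_const)
  then have "(\<lambda>k. U (g k) u) sums U S u"
    unfolding sums_def partial_def by (simp add: bounded_op_sum[OF U g(1)])
  then show ?thesis unfolding S_def by (rule sums_unique)
qed

section \<open>The tensor algebra\<close>

lemma tensor_alg_vanishes: "T \<in> A \<Longrightarrow> f \<notin> H \<Longrightarrow> T f = (\<lambda>u. 0)"
  unfolding tensor_alg_def by blast

lemma tensor_alg_l2: "T \<in> A \<Longrightarrow> f \<in> H \<Longrightarrow> T f \<in> H"
  unfolding tensor_alg_def by blast

lemma tensor_alg_approx: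
  "T \<in> A \<Longrightarrow> \<epsilon> > 0 \<Longrightarrow> \<exists>p\<in>A0. \<forall>f\<in>H. l2norm (\<lambda>u. T f u - p f u) \<le> \<epsilon> * l2norm f"
  unfolding tensor_alg_def by blast

lemma tensor_algI:
  assumes "\<And>\<epsilon>. \<epsilon> > 0 \<Longrightarrow> \<exists>p\<in>A0. \<forall>f\<in>H. l2norm (\<lambda>u. T f u - p f u) \<le> \<epsilon> * l2norm f"
    and "\<And>f. f \<notin> H \<Longrightarrow> T f = (\<lambda>u. 0)" "\<And>f. f \<in> H \<Longrightarrow> T f \<in> H"
  shows "T \<in> A"
  unfolding tensor_alg_def using assms by blast

lemma A0_subset_A: "p \<in> A0 \<Longrightarrow> p \<in> A"
  unfolding tensor_alg_def
  using bounded_op_vanishes[OF bounded_op_A0] bounded_op_l2[OF bounded_op_A0]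
  by (auto intro!: bexI[of _ p] simp: l2norm_nonneg)

lemma L_in_A: "e \<in> E \<Longrightarrow> L e \<in> A"
  by (intro A0_subset_A tpoly.gen_L)

lemma P_in_A: "v \<in> V \<Longrightarrow> P v \<in> A"
  by (intro A0_subset_A tpoly.gen_P)

lemma tensor_alg_additive:
  assumes T: "T \<in> A" and f: "f \<in> H" and g: "g \<in> H"
  shows "T (\<lambda>u. f u + g u) = (\<lambda>u. T f u + T g u)"
proof -
  define D where "D = (\<lambda>u. T (\<lambda>u. f u + g u) u - (T f u + T g u))"
  have fg: "(\<lambda>u. f u + g u) \<in> H" by (rule l2_add[OF f g])
  have "l2norm D \<le> \<epsilon> * (l2norm (\<lambda>u. f u + g u) + l2norm f + l2norm g)" if "\<epsilon> > 0" for \<epsilon>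
  proof -
    obtain q where q: "q \<in> A0" "\<forall>h\<in>H. l2norm (\<lambda>u. T h u - q h u) \<le> \<epsilon> * l2norm h"
      using tensor_alg_approx[OF T \<open>\<epsilon> > 0\<close>] by blast
    define err where "err h = (\<lambda>u. T h u - q h u)" for h
    have err: "square_summable (err h)" if "h \<in> H" for h
      unfolding err_def using tensor_alg_l2[OF T that] bounded_op_l2[OF bounded_op_A0[OF q(1)] that]
      by (intro square_summable_diff l2_square_summable)
    have "D = (\<lambda>u. err (\<lambda>u. f u + g u) u - err f u - err g u)"
      unfolding D_def err_def bounded_op_add[OF bounded_op_A0[OF q(1)] f g] by (simp add: algebra_simps)
    then have "l2norm D \<le> l2norm (err (\<lambda>u. f u + g u)) + l2norm (err f) + l2norm (err g)"
      using l2norm_diff_le[OF square_summable_diff[OF err[OF fg] err[OF f]] err[OF g]]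
        l2norm_diff_le[OF err[OF fg] err[OF f]] by simp
    also have "\<dots> \<le> \<epsilon> * l2norm (\<lambda>u. f u + g u) + \<epsilon> * l2norm f + \<epsilon> * l2norm g"
      using q(2) f g fg unfolding err_def by (intro add_mono) auto
    finally show ?thesis by (simp add: algebra_simps)
  qed
  then have "l2norm D \<le> 0"
    by (rule le_zero_if_le_epsilon_mult) (auto intro!: add_nonneg_nonneg l2norm_nonneg)
  moreover have "square_summable D"
    unfolding D_def using tensor_alg_l2[OF T] f g fg
    by (intro square_summable_diff square_summable_add l2_square_summable)
  ultimately have "D = (\<lambda>u. 0)" by (intro l2norm_le_0_imp_zero)
  then show ?thesis by (simp add: D_def fun_eq_iff)
qed

lemma tensor_alg_homogeneous:
  assumes T: "T \<in> A" and f: "f \<in> H"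
  shows "T (\<lambda>u. c * f u) = (\<lambda>u. c * T f u)"
proof -
  define D where "D = (\<lambda>u. T (\<lambda>u. c * f u) u - c * T f u)"
  have cf: "(\<lambda>u. c * f u) \<in> H" by (rule l2_cmult[OF f])
  have "l2norm D \<le> \<epsilon> * (l2norm (\<lambda>u. c * f u) + cmod c * l2norm f)" if "\<epsilon> > 0" for \<epsilon>
  proof -
    obtain q where q: "q \<in> A0" "\<forall>h\<in>H. l2norm (\<lambda>u. T h u - q h u) \<le> \<epsilon> * l2norm h"
      using tensor_alg_approx[OF T \<open>\<epsilon> > 0\<close>] by blast
    define err where "err h = (\<lambda>u. T h u - q h u)" for h
    have err: "square_summable (err h)" if "h \<in> H" for h
      unfolding err_def using tensor_alg_l2[OF T that] bounded_op_l2[OF bounded_op_A0[OF q(1)] that]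
      by (intro square_summable_diff l2_square_summable)
    have "D = (\<lambda>u. err (\<lambda>u. c * f u) u - c * err f u)"
      unfolding D_def err_def bounded_op_cmult[OF bounded_op_A0[OF q(1)] f] by (simp add: algebra_simps)
    then have "l2norm D \<le> l2norm (err (\<lambda>u. c * f u)) + cmod c * l2norm (err f)"
      using l2norm_diff_le[OF err[OF cf] square_summable_cmult[OF err[OF f]]]
      by (simp add: l2norm_cmult)
    also have "\<dots> \<le> \<epsilon> * l2norm (\<lambda>u. c * f u) + cmod c * (\<epsilon> * l2norm f)"
      using q(2) f cf unfolding err_def by (intro add_mono mult_left_mono) auto
    finally show ?thesis by (simp add: algebra_simps)
  qed
  then have "l2norm D \<le> 0"
    by (rule le_zero_if_le_epsilon_mult) (auto intro!: add_nonneg_nonneg mult_nonneg_nonneg l2norm_nonneg)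
  moreover have "square_summable D"
    unfolding D_def using tensor_alg_l2[OF T] f cf
    by (intro square_summable_diff square_summable_cmult l2_square_summable)
  ultimately have "D = (\<lambda>u. 0)" by (intro l2norm_le_0_imp_zero)
  then show ?thesis by (simp add: D_def fun_eq_iff)
qed

lemma bounded_op_tensor_alg:
  assumes T: "T \<in> A" shows "bounded_op T"
proof -
  obtain p where p: "p \<in> A0" "\<forall>f\<in>H. l2norm (\<lambda>u. T f u - p f u) \<le> 1 * l2norm f"
    using tensor_alg_approx[OF T, of 1] by auto
  obtain C where C: "C \<ge> 0" "\<forall>f\<in>H. l2norm (p f) \<le> C * l2norm f"
    using bounded_op_bound[OF bounded_op_A0[OF p(1)]] by blast
  show ?thesis
  proof (rule bounded_opI[where C = "1 + C"])
    fix f assume f: "f \<in> H"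
    have pf: "p f \<in> H" by (rule bounded_op_l2[OF bounded_op_A0[OF p(1)] f])
    have "l2norm (T f) = l2norm (\<lambda>u. (T f u - p f u) + p f u)" by simp
    also have "\<dots> \<le> l2norm (\<lambda>u. T f u - p f u) + l2norm (p f)"
      using tensor_alg_l2[OF T f] pf
      by (intro l2norm_triangle square_summable_diff l2_square_summable)
    also have "\<dots> \<le> (1 + C) * l2norm f" using p(2) C f by (simp add: distrib_right add_mono)
    finally show "l2norm (T f) \<le> (1 + C) * l2norm f" .
  qed (use C tensor_alg_vanishes[OF T] tensor_alg_l2[OF T] tensor_alg_additive[OF T]
      tensor_alg_homogeneous[OF T] in auto)
qed

lemma tensor_alg_norm_limit:
  assumes T: "\<And>N. T N \<in> A"
    and S: "\<And>f. f \<notin> H \<Longrightarrow> S f = (\<lambda>u. 0)" "\<And>f. f \<in> H \<Longrightarrow> S f \<in> H"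
    and \<delta>: "\<delta> \<longlonglongrightarrow> 0" "\<And>N f. f \<in> H \<Longrightarrow> l2norm (\<lambda>u. S f u - T N f u) \<le> \<delta> N * l2norm f"
  shows "S \<in> A"
proof -
  have "\<exists>p\<in>A0. \<forall>f\<in>H. l2norm (\<lambda>u. S f u - p f u) \<le> \<epsilon> * l2norm f" if "\<epsilon> > 0" for \<epsilon>
  proof -
    have "\<epsilon> / 2 > 0" using \<open>\<epsilon> > 0\<close> by simp
    then obtain N0 where "\<forall>n\<ge>N0. norm (\<delta> n - 0) < \<epsilon> / 2" using LIMSEQ_D[OF \<delta>(1)] by blast
    then have N: "\<delta> N0 < \<epsilon> / 2" by (auto dest: spec[of _ N0])
    obtain p where p: "p \<in> A0" "\<forall>f\<in>H. l2norm (\<lambda>u. T N0 f u - p f u) \<le> \<epsilon> / 2 * l2norm f"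
      using tensor_alg_approx[OF T, of "\<epsilon> / 2"] \<open>\<epsilon> > 0\<close> by auto
    have "l2norm (\<lambda>u. S f u - p f u) \<le> \<epsilon> * l2norm f" if f: "f \<in> H" for f
    proof -
      have "l2norm (\<lambda>u. S f u - p f u)
          \<le> l2norm (\<lambda>u. S f u - T N0 f u) + l2norm (\<lambda>u. T N0 f u - p f u)"
        using S(2)[OF f] tensor_alg_l2[OF T f] bounded_op_l2[OF bounded_op_A0[OF p(1)] f]
        by (intro l2norm_diff_triangle l2_square_summable)
      also have "\<dots> \<le> \<epsilon> / 2 * l2norm f + \<epsilon> / 2 * l2norm f"
      proof (rule add_mono)
        show "l2norm (\<lambda>u. S f u - T N0 f u) \<le> \<epsilon> / 2 * l2norm f"
          using \<delta>(2)[OF f, of N0] mult_right_mono[OF less_imp_le[OF N] l2norm_nonneg[of f]]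
          by linarith
      qed (use p(2) f in blast)
      finally show ?thesis by simp
    qed
    with p(1) show ?thesis by blast
  qed
  then show ?thesis using S by (rule tensor_algI)
qed

lemma tensor_alg_add:
  assumes S: "S \<in> A" and T: "T \<in> A" shows "(\<lambda>f u. S f u + T f u) \<in> A"
proof -
  have "\<exists>p\<in>A0. \<forall>f\<in>H. l2norm (\<lambda>u. S f u + T f u - p f u) \<le> \<epsilon> * l2norm f" if "\<epsilon> > 0" for \<epsilon>
  proof -
    obtain p where p: "p \<in> A0" "\<forall>h\<in>H. l2norm (\<lambda>u. S h u - p h u) \<le> \<epsilon> / 2 * l2norm h"
      using tensor_alg_approx[OF S, of "\<epsilon> / 2"] \<open>\<epsilon> > 0\<close> by auto
    obtain q where q: "q \<in> A0" "\<forall>h\<in>H. l2norm (\<lambda>u. T h u - q h u) \<le> \<epsilon> / 2 * l2norm h"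
      using tensor_alg_approx[OF T, of "\<epsilon> / 2"] \<open>\<epsilon> > 0\<close> by auto
    have "l2norm (\<lambda>u. S f u + T f u - (p f u + q f u)) \<le> \<epsilon> * l2norm f" if f: "f \<in> H" for f
    proof -
      have "l2norm (\<lambda>u. S f u + T f u - (p f u + q f u))
          = l2norm (\<lambda>u. (S f u - p f u) + (T f u - q f u))"
        by (simp add: algebra_simps)
      also have "\<dots> \<le> l2norm (\<lambda>u. S f u - p f u) + l2norm (\<lambda>u. T f u - q f u)"
        using tensor_alg_l2[OF S f] tensor_alg_l2[OF T f]
          bounded_op_l2[OF bounded_op_A0[OF p(1)] f] bounded_op_l2[OF bounded_op_A0[OF q(1)] f]
        by (intro l2norm_triangle square_summable_diff l2_square_summable)
      also have "\<dots> \<le> \<epsilon> / 2 * l2norm f + \<epsilon> / 2 * l2norm f" using p q f by (intro add_mono) auto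
      finally show ?thesis by simp
    qed
    moreover have "(\<lambda>f u. p f u + q f u) \<in> A0" using p(1) q(1) by (rule tpoly.add)
    ultimately show ?thesis by (intro bexI[of _ "\<lambda>f u. p f u + q f u"]) auto
  qed
  then show ?thesis
  proof (rule tensor_algI)
    fix f show "f \<in> H \<Longrightarrow> (\<lambda>u. S f u + T f u) \<in> H"
      by (intro l2_add tensor_alg_l2[OF S] tensor_alg_l2[OF T])
  next
    fix f assume "f \<notin> H"
    then show "(\<lambda>u. S f u + T f u) = (\<lambda>u. 0)"
      using tensor_alg_vanishes[OF S] tensor_alg_vanishes[OF T] by simp
  qed
qed

lemma tensor_alg_scale:
  assumes T: "T \<in> A" shows "(\<lambda>f u. c * T f u) \<in> A"
proof -
  have "\<exists>p\<in>A0. \<forall>f\<in>H. l2norm (\<lambda>u. c * T f u - p f u) \<le> \<epsilon> * l2norm f" if "\<epsilon> > 0" for \<epsilon>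
  proof -
    define \<delta> where "\<delta> = \<epsilon> / (cmod c + 1)"
    have "\<delta> > 0" using \<open>\<epsilon> > 0\<close> by (simp add: \<delta>_def add_nonneg_pos)
    then obtain q where q: "q \<in> A0" "\<forall>h\<in>H. l2norm (\<lambda>u. T h u - q h u) \<le> \<delta> * l2norm h"
      using tensor_alg_approx[OF T] by blast
    have "l2norm (\<lambda>u. c * T f u - c * q f u) \<le> \<epsilon> * l2norm f" if f: "f \<in> H" for f
    proof -
      have "l2norm (\<lambda>u. c * T f u - c * q f u) = cmod c * l2norm (\<lambda>u. T f u - q f u)"
        using l2norm_cmult[of c "\<lambda>u. T f u - q f u"] by (simp add: algebra_simps)
      also have "\<dots> \<le> cmod c * (\<delta> * l2norm f)" using q f by (intro mult_left_mono) auto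
      also have "\<dots> \<le> \<epsilon> * l2norm f"
      proof -
        have "\<epsilon> * (cmod c / (cmod c + 1)) \<le> \<epsilon>" using \<open>\<epsilon> > 0\<close> by (intro mult_left_le) (auto simp: divide_le_eq_1 add_nonneg_pos)
        then have "cmod c * \<delta> \<le> \<epsilon>" by (simp add: \<delta>_def mult_ac)
        then show ?thesis using l2norm_nonneg[of f] by (metis mult.assoc mult_right_mono)
      qed
      finally show ?thesis .
    qed
    moreover have "(\<lambda>f u. c * q f u) \<in> A0" using q(1) by (rule tpoly.smult)
    ultimately show ?thesis by (intro bexI[of _ "\<lambda>f u. c * q f u"]) auto
  qed
  then show ?thesis
    by (rule tensor_algI) (simp_all add: tensor_alg_vanishes[OF T] l2_cmult tensor_alg_l2[OF T])
qed

lemma l2norm_comp_diff_le: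
  assumes S: "S \<in> A" and T: "T \<in> A" and p: "p \<in> A0" and q: "q \<in> A0" and f: "f \<in> H"
    and Sp: "\<And>h. h \<in> H \<Longrightarrow> l2norm (\<lambda>u. S h u - p h u) \<le> \<delta>1 * l2norm h"
    and Tq: "l2norm (\<lambda>u. T f u - q f u) \<le> \<delta>2 * l2norm f"
    and CT: "l2norm (T f) \<le> CT * l2norm f"
    and Cp: "\<And>h. h \<in> H \<Longrightarrow> l2norm (p h) \<le> Cp * l2norm h"
    and nonneg: "\<delta>1 \<ge> 0" "Cp \<ge> 0"
  shows "l2norm (\<lambda>u. S (T f) u - p (q f) u) \<le> (\<delta>1 * CT + Cp * \<delta>2) * l2norm f"
proof -
  have bp: "bounded_op p" by (rule bounded_op_A0[OF p])
  have Tf: "T f \<in> H" by (rule tensor_alg_l2[OF T f])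
  have qf: "q f \<in> H" by (rule bounded_op_l2[OF bounded_op_A0[OF q] f])
  have d: "(\<lambda>u. T f u - q f u) \<in> H" by (rule l2_diff[OF Tf qf])
  have "l2norm (\<lambda>u. S (T f) u - p (q f) u)
      = l2norm (\<lambda>u. (S (T f) u - p (T f) u) + p (\<lambda>u. T f u - q f u) u)"
    by (simp add: bounded_op_diff[OF bp Tf qf])
  also have "\<dots> \<le> l2norm (\<lambda>u. S (T f) u - p (T f) u) + l2norm (p (\<lambda>u. T f u - q f u))"
    using tensor_alg_l2[OF S Tf] bounded_op_l2[OF bp Tf] bounded_op_l2[OF bp d]
    by (intro l2norm_triangle square_summable_diff l2_square_summable)
  also have "\<dots> \<le> \<delta>1 * (CT * l2norm f) + Cp * (\<delta>2 * l2norm f)"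
  proof (rule add_mono)
    show "l2norm (\<lambda>u. S (T f) u - p (T f) u) \<le> \<delta>1 * (CT * l2norm f)"
      using Sp[OF Tf] mult_left_mono[OF CT nonneg(1)] by linarith
    show "l2norm (p (\<lambda>u. T f u - q f u)) \<le> Cp * (\<delta>2 * l2norm f)"
      using Cp[OF d] mult_left_mono[OF Tq nonneg(2)] by linarith
  qed
  finally show ?thesis by (simp add: algebra_simps)
qed

lemma tensor_alg_comp:
  assumes S: "S \<in> A" and T: "T \<in> A" shows "S \<circ> T \<in> A"
proof -
  obtain CT where CT: "CT \<ge> 0" "\<forall>f\<in>H. l2norm (T f) \<le> CT * l2norm f"
    using bounded_op_bound[OF bounded_op_tensor_alg[OF T]] by blast
  have "\<exists>pq\<in>A0. \<forall>f\<in>H. l2norm (\<lambda>u. (S \<circ> T) f u - pq f u) \<le> \<epsilon> * l2norm f" if "\<epsilon> > 0" for \<epsilon>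
  proof -
    define \<delta>1 where "\<delta>1 = \<epsilon> / (2 * (CT + 1))"
    have "\<delta>1 > 0" using \<open>\<epsilon> > 0\<close> CT by (simp add: \<delta>1_def add_pos_nonneg)
    then obtain p where p: "p \<in> A0" "\<forall>h\<in>H. l2norm (\<lambda>u. S h u - p h u) \<le> \<delta>1 * l2norm h"
      using tensor_alg_approx[OF S] by blast
    obtain Cp where Cp: "Cp \<ge> 0" "\<forall>f\<in>H. l2norm (p f) \<le> Cp * l2norm f"
      using bounded_op_bound[OF bounded_op_A0[OF p(1)]] by blast
    define \<delta>2 where "\<delta>2 = \<epsilon> / (2 * (Cp + 1))"
    have "\<delta>2 > 0" using \<open>\<epsilon> > 0\<close> Cp by (simp add: \<delta>2_def add_pos_nonneg)
    then obtain q where q: "q \<in> A0" "\<forall>h\<in>H. l2norm (\<lambda>u. T h u - q h u) \<le> \<delta>2 * l2norm h"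
      using tensor_alg_approx[OF T] by blast
    have "\<delta>1 * CT + Cp * \<delta>2 \<le> \<epsilon> / 2 + \<epsilon> / 2"
      using CT(1) Cp(1) \<open>\<epsilon> > 0\<close> by (intro add_mono) (simp_all add: \<delta>1_def \<delta>2_def field_simps)
    then have "l2norm (\<lambda>u. (S \<circ> T) f u - (p \<circ> q) f u) \<le> \<epsilon> * l2norm f" if f: "f \<in> H" for f
      using l2norm_comp_diff_le[OF S T p(1) q(1) f, of \<delta>1 \<delta>2 CT Cp] p(2) q(2) CT Cp f \<open>\<delta>1 > 0\<close>
        mult_right_mono[of "\<delta>1 * CT + Cp * \<delta>2" \<epsilon> "l2norm f"] l2norm_nonneg[of f]
      by auto
    moreover have "p \<circ> q \<in> A0" using p(1) q(1) by (rule tpoly.mult)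
    ultimately show ?thesis by (intro bexI[of _ "p \<circ> q"]) auto
  qed
  moreover have "(S \<circ> T) f = (\<lambda>u. 0)" if "f \<notin> H" for f
    using that by (simp add: tensor_alg_vanishes[OF T] bounded_op_zero[OF bounded_op_tensor_alg[OF S]])
  ultimately show ?thesis by (intro tensor_algI) (auto simp: tensor_alg_l2[OF S] tensor_alg_l2[OF T])
qed

lemma tensor_alg_sum:
  assumes "A \<noteq> {}" "finite I" "\<And>i. i \<in> I \<Longrightarrow> T i \<in> A"
  shows "(\<lambda>f u. \<Sum>i\<in>I. T i f u) \<in> A"
  using assms(2,3)
proof (induction I rule: finite_induct)
  case empty
  obtain T0 where "T0 \<in> A" using assms(1) by blast
  then show ?case using tensor_alg_scale[of T0 0] by simp
next
  case (insert i I)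
  then show ?case using tensor_alg_add[of "T i" "\<lambda>f u. \<Sum>i\<in>I. T i f u"] by simp
qed

lemma l2norm_funpow_le:
  assumes U: "\<And>f. f \<in> H \<Longrightarrow> U f \<in> H" and bound: "\<And>f. f \<in> H \<Longrightarrow> l2norm (U f) \<le> c * l2norm f"
    and c: "c \<ge> 0" and f: "f \<in> H"
  shows "l2norm ((U ^^ k) f) \<le> c ^ k * l2norm f"
proof -
  have "(U ^^ k) f \<in> H \<and> l2norm ((U ^^ k) f) \<le> c ^ k * l2norm f"
  proof (induction k)
    case (Suc k)
    then have "l2norm ((U ^^ Suc k) f) \<le> c * (c ^ k * l2norm f)"
      using bound[of "(U ^^ k) f"] c by (auto intro: order_trans mult_left_mono)
    with Suc show ?case by (simp add: U mult.assoc)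
  qed (simp add: f)
  then show ?thesis ..
qed

lemma tensor_alg_funpow: "U \<in> A \<Longrightarrow> U ^^ Suc k \<in> A"
  by (induction k) (simp_all add: tensor_alg_comp)

lemma tensor_alg_suminf:
  fixes W :: "nat \<Rightarrow> ('v, 'e) op"
  assumes W: "\<And>k. W k \<in> A" and c: "0 \<le> c" "c < 1"
    and bound: "\<And>k f. f \<in> H \<Longrightarrow> l2norm (W k f) \<le> l2norm f * c ^ k"
  shows "(\<lambda>f u. \<Sum>k. W k f u) \<in> A"
proof (rule tensor_alg_norm_limit[where T = "\<lambda>N f u. \<Sum>k<N. W k f u" and \<delta> = "\<lambda>N. c ^ N / (1 - c)"])
  show "(\<lambda>f u. \<Sum>k<N. W k f u) \<in> A" for N using tensor_alg_sum[of "{..<N}" W] W by auto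
  show "(\<lambda>u. \<Sum>k. W k f u) = (\<lambda>u. 0)" if "f \<notin> H" for f using tensor_alg_vanishes[OF W that] by simp
  show "(\<lambda>u. \<Sum>k. W k f u) \<in> H" if "f \<in> H" for f
    by (rule l2_suminf[OF tensor_alg_l2[OF W that] bound[OF that] c])
  show "(\<lambda>N. c ^ N / (1 - c)) \<longlonglongrightarrow> 0" using c by (intro tendsto_divide_zero LIMSEQ_power_zero) auto
  show "l2norm (\<lambda>u. (\<Sum>k. W k f u) - (\<Sum>k<N. W k f u)) \<le> c ^ N / (1 - c) * l2norm f"
    if "f \<in> H" for N f
    using l2_geometric_series(3)[OF l2_square_summable[OF tensor_alg_l2[OF W that]] bound[OF that] c]
    by (simp add: ac_simps)
qed

lemma neumann_series:
  assumes U: "U \<in> A" and c: "0 \<le> c" "c < 1"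
    and bound: "\<And>f. f \<in> H \<Longrightarrow> l2norm (U f) \<le> c * l2norm f"
  shows "\<exists>S\<in>A. S = (\<lambda>f u. U f u + (U \<circ> S) f u)"
proof -
  define W where "W k = U ^^ Suc k" for k
  have W_A: "W k \<in> A" for k unfolding W_def by (rule tensor_alg_funpow[OF U])
  have W_l2: "W k f \<in> H" if "f \<in> H" for f k by (rule tensor_alg_l2[OF W_A that])
  have W_bound: "l2norm (W k f) \<le> l2norm f * c ^ k" if f: "f \<in> H" for f k
  proof -
    have "l2norm (W k f) \<le> c ^ Suc k * l2norm f"
      unfolding W_def by (rule l2norm_funpow_le[OF tensor_alg_l2[OF U] bound c(1) f])
    also have "\<dots> \<le> l2norm f * c ^ k"
      using mult_left_le_one_le[of "l2norm f * c ^ k" c] c l2norm_nonneg[of f] by (simp add: mult_ac)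
    finally show ?thesis .
  qed
  define S where "S = (\<lambda>f u. \<Sum>k. W k f u)"
  have S_A: "S \<in> A" unfolding S_def by (rule tensor_alg_suminf[OF W_A c W_bound])
  have "S f u = U f u + (U \<circ> S) f u" for f u
  proof (cases "f \<in> H")
    case True
    have "S f u = W 0 f u + (\<Sum>k. W (Suc k) f u)"
      unfolding S_def
      using suminf_split_head[OF l2_geometric_series(1)[OF l2_square_summable[OF W_l2[OF True]] W_bound[OF True] c]]
      by simp
    also have "(\<Sum>k. W (Suc k) f u) = (\<Sum>k. U (W k f) u)" by (simp add: W_def)
    also have "\<dots> = U (S f) u"
      unfolding S_def
      by (rule bounded_op_suminf[OF bounded_op_tensor_alg[OF U] W_l2[OF True] W_bound[OF True] c, symmetric])
    finally show ?thesis by (simp add: W_def)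
  next
    case False
    then show ?thesis
      using tensor_alg_vanishes[OF S_A] tensor_alg_vanishes[OF U] bounded_op_zero[OF bounded_op_tensor_alg[OF U]]
      by simp
  qed
  with S_A show ?thesis by (intro bexI[of _ S]) auto
qed

section \<open>Characters\<close>

abbreviation "M \<equiv> characters V E r s"

lemma characters_iff: "\<rho> \<in> M \<longleftrightarrow> \<rho> \<in> extensional A \<and>
     (\<forall>S\<in>A. \<forall>T\<in>A. \<rho> (\<lambda>f u. S f u + T f u) = \<rho> S + \<rho> T) \<and>
     (\<forall>c. \<forall>T\<in>A. \<rho> (\<lambda>f u. c * T f u) = c * \<rho> T) \<and>
     (\<forall>S\<in>A. \<forall>T\<in>A. \<rho> (S \<circ> T) = \<rho> S * \<rho> T) \<and>
     (\<exists>T\<in>A. \<rho> T \<noteq> 0)"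
  unfolding characters_def Let_def by simp

lemma character_add: "\<rho> \<in> M \<Longrightarrow> S \<in> A \<Longrightarrow> T \<in> A \<Longrightarrow> \<rho> (\<lambda>f u. S f u + T f u) = \<rho> S + \<rho> T"
  unfolding characters_iff by blast

lemma character_scale: "\<rho> \<in> M \<Longrightarrow> T \<in> A \<Longrightarrow> \<rho> (\<lambda>f u. c * T f u) = c * \<rho> T"
  unfolding characters_iff by blast

lemma character_mult: "\<rho> \<in> M \<Longrightarrow> S \<in> A \<Longrightarrow> T \<in> A \<Longrightarrow> \<rho> (S \<circ> T) = \<rho> S * \<rho> T"
  unfolding characters_iff by blast

lemma character_extensional: "\<rho> \<in> M \<Longrightarrow> \<rho> \<in> extensional A"
  unfolding characters_iff by blast

lemma character_nontrivial: "\<rho> \<in> M \<Longrightarrow> \<exists>T\<in>A. \<rho> T \<noteq> 0"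
  unfolding characters_iff by blast

lemma character_sum:
  assumes \<rho>: "\<rho> \<in> M" and "finite I" "\<And>i. i \<in> I \<Longrightarrow> T i \<in> A"
  shows "\<rho> (\<lambda>f u. \<Sum>i\<in>I. T i f u) = (\<Sum>i\<in>I. \<rho> (T i))"
  using assms(2,3)
proof (induction I rule: finite_induct)
  case empty
  obtain T0 where "T0 \<in> A" using character_nontrivial[OF \<rho>] by blast
  then show ?case using character_scale[OF \<rho>, of T0 0] by simp
next
  case (insert i I)
  then have "(\<lambda>f u. \<Sum>i\<in>I. T i f u) \<in> A" by (intro tensor_alg_sum) auto
  with insert show ?case using character_add[OF \<rho>, of "T i" "\<lambda>f u. \<Sum>i\<in>I. T i f u"] by simp
qed

text \<open>The algebra has no unit, so instead of inverting \<open>1 - U\<close> for \<open>U = T / \<rho> T\<close> we use the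
  quasi-inverse \<open>S = U + U S\<close> given by the Neumann series; it would satisfy \<open>\<rho> S = 1 + \<rho> S\<close>.\<close>

lemma character_norm_le:
  assumes \<rho>: "\<rho> \<in> M" and T: "T \<in> A"
    and C: "C \<ge> 0" "\<And>f. f \<in> H \<Longrightarrow> l2norm (T f) \<le> C * l2norm f"
  shows "cmod (\<rho> T) \<le> C"
proof (rule ccontr)
  assume "\<not> cmod (\<rho> T) \<le> C"
  then have gt: "cmod (\<rho> T) > C" by simp
  then have a: "\<rho> T \<noteq> 0" using C(1) by auto
  define U where "U = (\<lambda>f u. (1 / \<rho> T) * T f u)"
  have U_A: "U \<in> A" unfolding U_def by (rule tensor_alg_scale[OF T])
  have "\<rho> U = 1" unfolding U_def using character_scale[OF \<rho> T, of "1 / \<rho> T"] a by simp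
  have "l2norm (U f) \<le> C / cmod (\<rho> T) * l2norm f" if "f \<in> H" for f
  proof -
    have "l2norm (U f) = l2norm (T f) / cmod (\<rho> T)"
      unfolding U_def l2norm_cmult by (simp add: norm_divide)
    also have "\<dots> \<le> C * l2norm f / cmod (\<rho> T)" using C(2)[OF that] by (simp add: divide_right_mono)
    finally show ?thesis by simp
  qed
  moreover have "0 \<le> C / cmod (\<rho> T)" "C / cmod (\<rho> T) < 1"
    using C(1) gt by (auto simp: divide_less_eq)
  ultimately obtain S where S: "S \<in> A" "S = (\<lambda>f u. U f u + (U \<circ> S) f u)"
    using neumann_series[OF U_A] by blast
  have "\<rho> S = \<rho> U + \<rho> (U \<circ> S)"
    using character_add[OF \<rho> U_A tensor_alg_comp[OF U_A S(1)]] S(2) by metis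
  also have "\<dots> = 1 + \<rho> S" using character_mult[OF \<rho> U_A S(1)] \<open>\<rho> U = 1\<close> by simp
  finally show False by simp
qed

lemma character_dist_le:
  assumes \<rho>: "\<rho> \<in> M" and S: "S \<in> A" and T: "T \<in> A"
    and \<epsilon>: "\<epsilon> \<ge> 0" "\<And>f. f \<in> H \<Longrightarrow> l2norm (\<lambda>u. S f u - T f u) \<le> \<epsilon> * l2norm f"
  shows "cmod (\<rho> S - \<rho> T) \<le> \<epsilon>"
proof -
  have mT: "(\<lambda>f u. (-1) * T f u) \<in> A" by (rule tensor_alg_scale[OF T])
  have D: "(\<lambda>f u. S f u + (-1) * T f u) \<in> A" using tensor_alg_add[OF S mT] by simp
  have "\<rho> (\<lambda>f u. S f u + (-1) * T f u) = \<rho> S - \<rho> T"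
    using character_add[OF \<rho> S mT] character_scale[OF \<rho> T, of "-1"] by simp
  moreover have "cmod (\<rho> (\<lambda>f u. S f u + (-1) * T f u)) \<le> \<epsilon>"
    by (rule character_norm_le[OF \<rho> D \<epsilon>(1)]) (use \<epsilon>(2) in simp)
  ultimately show ?thesis by simp
qed

end

section \<open>Characters at a vertex\<close>

locale digraph_loops = digraph V E r s
  for V :: "'v set" and E :: "'e set" and r s :: "'e \<Rightarrow> 'v" +
  fixes x :: 'v and n :: nat and ee :: "nat \<Rightarrow> 'e"
  assumes x_in_V: "x \<in> V"
    and loops_enum: "bij_betw ee {..<n} {e \<in> E. s e = x \<and> r e = x}"
begin

abbreviation "Mx \<equiv> characters_at V E r s x"

lemma characters_at_iff: "\<rho> \<in> Mx \<longleftrightarrow> \<rho> \<in> M \<and> \<rho> (P x) = 1"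
  by (simp add: characters_at_def)

lemma loop_edge: "i < n \<Longrightarrow> ee i \<in> E" "i < n \<Longrightarrow> s (ee i) = x" "i < n \<Longrightarrow> r (ee i) = x"
  using loops_enum by (auto simp: bij_betw_def)

lemma loop_inj: "inj_on ee {..<n}"
  using loops_enum by (simp add: bij_betw_def)

lemma loop_enumerated: "e \<in> E \<Longrightarrow> s e = x \<Longrightarrow> r e = x \<Longrightarrow> \<exists>i<n. e = ee i"
  using loops_enum by (auto simp: bij_betw_def)

lemma character_at_P:
  assumes \<rho>: "\<rho> \<in> Mx" and v: "v \<in> V" shows "\<rho> (P v) = (if v = x then 1 else 0)"
proof (cases "v = x")
  case False
  have \<rho>M: "\<rho> \<in> M" "\<rho> (P x) = 1" using \<rho> by (auto simp: characters_at_iff)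
  have "\<rho> (P v) = \<rho> (P v \<circ> P x)" using character_mult[OF \<rho>M(1) P_in_A[OF v] P_in_A[OF x_in_V]] \<rho>M(2) by simp
  also have "\<dots> = 0"
    unfolding P_orthogonal[OF False] using character_scale[OF \<rho>M(1) P_in_A[OF x_in_V], of 0] by simp
  finally show ?thesis using False by simp
qed (use \<rho> in \<open>simp add: characters_at_iff\<close>)

lemma character_at_L_non_loop:
  assumes \<rho>: "\<rho> \<in> Mx" and e: "e \<in> E" "\<not> (s e = x \<and> r e = x)" shows "\<rho> (L e) = 0"
proof -
  have \<rho>M: "\<rho> \<in> M" using \<rho> by (simp add: characters_at_iff)
  have ends: "r e \<in> V" "s e \<in> V" using edge_ends[OF e(1)] by auto
  show ?thesis
  proof (cases "r e = x")
    case False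
    have "\<rho> (L e) = \<rho> (P (r e)) * \<rho> (L e)"
      using character_mult[OF \<rho>M P_in_A[OF ends(1)] L_in_A[OF e(1)]] by (simp add: P_range_L)
    then show ?thesis using character_at_P[OF \<rho> ends(1)] False by simp
  next
    case True
    then have "s e \<noteq> x" using e(2) by simp
    have "\<rho> (L e) = \<rho> (L e) * \<rho> (P (s e))"
      using character_mult[OF \<rho>M L_in_A[OF e(1)] P_in_A[OF ends(2)]] by (simp add: L_source_P)
    then show ?thesis using character_at_P[OF \<rho> ends(2)] \<open>s e \<noteq> x\<close> by simp
  qed
qed

lemma characters_at_agree_on_A0:
  assumes \<rho>: "\<rho> \<in> Mx" and \<sigma>: "\<sigma> \<in> Mx" and loops: "\<And>i. i < n \<Longrightarrow> \<rho> (L (ee i)) = \<sigma> (L (ee i))"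
    and p: "p \<in> A0"
  shows "\<rho> p = \<sigma> p"
  using p
proof (induction rule: tpoly.induct)
  case (gen_L e)
  show ?case
  proof (cases "s e = x \<and> r e = x")
    case True
    then show ?thesis using loop_enumerated gen_L loops by blast
  next
    case False
    then show ?thesis using character_at_L_non_loop[OF \<rho> gen_L] character_at_L_non_loop[OF \<sigma> gen_L] by simp
  qed
next
  case (gen_P v) then show ?case using character_at_P[OF \<rho>] character_at_P[OF \<sigma>] by simp
next
  case (add p q)
  then show ?case using \<rho> \<sigma> by (simp add: characters_at_iff character_add A0_subset_A)
next
  case (smult p c)
  then show ?case using \<rho> \<sigma> by (simp add: characters_at_iff character_scale A0_subset_A)
next
  case (mult p q)
  then have "p \<in> A" "q \<in> A" by (auto intro: A0_subset_A)
  then show ?case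
    using mult.IH \<rho> \<sigma> character_mult[of \<rho> p q] character_mult[of \<sigma> p q]
    by (simp add: characters_at_iff comp_def)
qed

lemma characters_at_eqI:
  assumes \<rho>: "\<rho> \<in> Mx" and \<sigma>: "\<sigma> \<in> Mx" and loops: "\<And>i. i < n \<Longrightarrow> \<rho> (L (ee i)) = \<sigma> (L (ee i))"
  shows "\<rho> = \<sigma>"
proof -
  have \<rho>M: "\<rho> \<in> M" and \<sigma>M: "\<sigma> \<in> M" using \<rho> \<sigma> by (auto simp: characters_at_iff)
  show ?thesis
  proof (rule extensionalityI[OF character_extensional[OF \<rho>M] character_extensional[OF \<sigma>M]])
    fix T assume T: "T \<in> A"
    have "cmod (\<rho> T - \<sigma> T) \<le> 0"
    proof (rule le_zero_if_le_epsilon_mult)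
      fix \<epsilon> :: real assume "\<epsilon> > 0"
      then obtain p where p: "p \<in> A0" "\<forall>f\<in>H. l2norm (\<lambda>u. T f u - p f u) \<le> \<epsilon> * l2norm f"
        using tensor_alg_approx[OF T] by blast
      have "cmod (\<rho> T - \<rho> p) \<le> \<epsilon>" "cmod (\<sigma> T - \<sigma> p) \<le> \<epsilon>"
        using character_dist_le[OF _ T A0_subset_A[OF p(1)]] \<rho>M \<sigma>M \<open>\<epsilon> > 0\<close> p(2) by auto
      moreover have "\<rho> p = \<sigma> p" by (rule characters_at_agree_on_A0[OF \<rho> \<sigma> loops p(1)])
      ultimately show "cmod (\<rho> T - \<sigma> T) \<le> \<epsilon> * 2"
        using norm_triangle_le_diff[of "\<rho> T - \<rho> p" "\<sigma> T - \<sigma> p"] by simp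
    qed simp
    then show "\<rho> T = \<sigma> T" by simp
  qed
qed

lemma character_at_in_ball:
  assumes \<rho>: "\<rho> \<in> Mx" shows "(\<Sum>i<n. (cmod (\<rho> (L (ee i))))\<^sup>2) \<le> 1"
proof -
  have \<rho>M: "\<rho> \<in> M" using \<rho> by (simp add: characters_at_iff)
  define lam where "lam i = \<rho> (L (ee i))" for i
  define Q where "Q = (\<Sum>i<n. (cmod (lam i))\<^sup>2)"
  have Q: "Q \<ge> 0" by (simp add: Q_def sum_nonneg)
  define T where "T = (\<lambda>f u. \<Sum>i<n. cnj (lam i) * L (ee i) f u)"
  have terms: "(\<lambda>f u. cnj (lam i) * L (ee i) f u) \<in> A" if "i \<in> {..<n}" for i
    using that by (intro tensor_alg_scale L_in_A loop_edge) simp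
  have "A \<noteq> {}" using character_nontrivial[OF \<rho>M] by blast
  then have "T \<in> A" unfolding T_def by (rule tensor_alg_sum) (use terms in auto)
  moreover have "l2norm (T f) \<le> sqrt Q * l2norm f" if "f \<in> H" for f
    using l2norm_sum_shifts_le[OF _ loop_inj that, where c = "\<lambda>i. cnj (lam i)"] by (simp add: T_def Q_def)
  ultimately have "cmod (\<rho> T) \<le> sqrt Q" using Q by (intro character_norm_le[OF \<rho>M]) auto
  moreover have "\<rho> T = of_real Q"
  proof -
    have "\<rho> T = (\<Sum>i<n. \<rho> (\<lambda>f u. cnj (lam i) * L (ee i) f u))"
      unfolding T_def by (rule character_sum[OF \<rho>M finite_lessThan terms])
    also have "\<dots> = (\<Sum>i<n. cnj (lam i) * lam i)"
      using character_scale[OF \<rho>M L_in_A[OF loop_edge(1)]] by (simp add: lam_def)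
    also have "\<dots> = of_real Q"
      unfolding Q_def of_real_sum complex_norm_square by (simp only: mult.commute)
    finally show ?thesis .
  qed
  ultimately have "Q \<le> sqrt Q" using Q by simp
  then show ?thesis using le_1_if_le_sqrt[OF Q] by (simp add: Q_def lam_def)
qed

end

section \<open>Characters from points of the open ball\<close>

lemma sum_words_of_length:
  fixes g :: "'a \<Rightarrow> real"
  assumes "finite X"
  shows "(\<Sum>ws\<in>{ws. set ws \<subseteq> X \<and> length ws = k}. prod_list (map g ws)) = (\<Sum>a\<in>X. g a) ^ k"
proof (induction k)
  case 0
  have "{ws. set ws \<subseteq> X \<and> length ws = 0} = {[]}" by auto
  then show ?case by simp
next
  case (Suc k)
  have "(\<Sum>ws\<in>{ws. set ws \<subseteq> X \<and> length ws = Suc k}. prod_list (map g ws))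
      = (\<Sum>(ws, a)\<in>{ws. set ws \<subseteq> X \<and> length ws = k} \<times> X. g a * prod_list (map g ws))"
    by (simp only: lists_length_Suc_eq, subst sum.reindex[OF inj_split_Cons]) (simp add: case_prod_beta)
  also have "\<dots> = (\<Sum>ws\<in>{ws. set ws \<subseteq> X \<and> length ws = k}. prod_list (map g ws)) * (\<Sum>a\<in>X. g a)"
    by (simp add: sum.cartesian_product[symmetric] sum_distrib_left sum_distrib_right mult.commute)
  finally show ?case using Suc by (simp add: mult.commute)
qed

lemma sum_words_of_length_le:
  fixes h :: "'a list \<Rightarrow> real"
  assumes "finite X"
  shows "(\<Sum>ws\<in>{ws. set ws \<subseteq> X \<and> length ws \<le> K}. h ws)
    = (\<Sum>k\<le>K. \<Sum>ws\<in>{ws. set ws \<subseteq> X \<and> length ws = k}. h ws)"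
proof (induction K)
  case (Suc K)
  have "{ws. set ws \<subseteq> X \<and> length ws \<le> Suc K}
      = {ws. set ws \<subseteq> X \<and> length ws \<le> K} \<union> {ws. set ws \<subseteq> X \<and> length ws = Suc K}"
    by auto
  then show ?case
    using Suc assms
    by (simp add: sum.union_disjoint finite_lists_length_le finite_lists_length_eq disjoint_iff)
qed simp

lemma word_products_summable:
  fixes g :: "'a \<Rightarrow> real"
  assumes X: "finite X" and g: "\<And>a. g a \<ge> 0" and q: "(\<Sum>a\<in>X. g a) < 1"
  shows "(\<lambda>ws. prod_list (map g ws)) summable_on {ws. set ws \<subseteq> X}"
proof (rule nonneg_bdd_above_summable_on)
  have prod_nonneg: "prod_list (map g ws) \<ge> 0" for ws by (induction ws) (auto simp: g)
  then show "\<And>ws. ws \<in> {ws. set ws \<subseteq> X} \<Longrightarrow> 0 \<le> prod_list (map g ws)" by blast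
  define Q where "Q = (\<Sum>a\<in>X. g a)"
  have Q: "0 \<le> Q" "Q < 1" using g q by (auto simp: Q_def sum_nonneg)
  show "bdd_above (sum (\<lambda>ws. prod_list (map g ws)) ` {F. F \<subseteq> {ws. set ws \<subseteq> X} \<and> finite F})"
  proof (rule bdd_aboveI[of _ "1 / (1 - Q)"], clarify)
    fix F assume F: "finite F" "F \<subseteq> {ws. set ws \<subseteq> X}"
    define K where "K = Max (length ` F)"
    have "F \<subseteq> {ws. set ws \<subseteq> X \<and> length ws \<le> K}" using F by (auto simp: K_def)
    then have "(\<Sum>ws\<in>F. prod_list (map g ws)) \<le> (\<Sum>ws\<in>{ws. set ws \<subseteq> X \<and> length ws \<le> K}. prod_list (map g ws))"
      using prod_nonneg by (intro sum_mono2 finite_lists_length_le X) auto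
    also have "\<dots> = (\<Sum>k<Suc K. Q ^ k)"
      by (simp add: sum_words_of_length_le[OF X] sum_words_of_length[OF X] Q_def lessThan_Suc_atMost)
    also have "\<dots> \<le> 1 / (1 - Q)" using Q by (rule sum_power_le)
    finally show "(\<Sum>ws\<in>F. prod_list (map g ws)) \<le> 1 / (1 - Q)" .
  qed
qed

lemma power2_norm_prod_list: "(cmod (prod_list (map g ws)))\<^sup>2 = prod_list (map (\<lambda>a. (cmod (g a))\<^sup>2) ws)"
  by (induction ws) (auto simp: norm_mult power_mult_distrib)

locale ball_character = digraph_loops V E r s x n ee
  for V :: "'v set" and E :: "'e set" and r s :: "'e \<Rightarrow> 'v"
    and x :: 'v and n :: nat and ee :: "nat \<Rightarrow> 'e" +
  fixes lam :: "nat \<Rightarrow> complex"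
  assumes lam_in_open_ball: "(\<Sum>i<n. (cmod (lam i))\<^sup>2) < 1"
begin

abbreviation "loops \<equiv> {e \<in> E. s e = x \<and> r e = x}"
abbreviation "loop_words \<equiv> {ws. set ws \<subseteq> loops}"

definition weight :: "'e \<Rightarrow> complex" where
  "weight e = lam (inv_into {..<n} ee e)"

definition word_weight :: "'e list \<Rightarrow> complex" where
  "word_weight ws = prod_list (map weight ws)"

definition word_path :: "'e list \<Rightarrow> ('v, 'e) gpath" where
  "word_path ws = (if ws = [] then Vtx x else Edges ws)"

text \<open>\<open>chi f\<close> is the inner product of \<open>f\<close> with \<open>\<nu> = \<Sum>\<^sub>w cnj (lam\<^sup>w) \<xi>\<^sub>w\<close>, summed over the words \<open>w\<close>
  in the loops at \<open>x\<close>. This vector satisfies \<open>L\<^sub>e\<^sup>* \<nu> = cnj (weight e) \<nu>\<close> and \<open>P\<^sub>v\<^sup>* \<nu> = [v = x] \<nu>\<close>,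
  which makes \<open>T \<mapsto> chi (T \<xi>\<^sub>x)\<close> multiplicative.\<close>

definition chi :: "('v, 'e) vec \<Rightarrow> complex" where
  "chi f = (\<Sum>\<^sub>\<infinity>ws\<in>loop_words. word_weight ws * f (word_path ws))"

definition xi :: "('v, 'e) vec" where
  "xi u = (if u = Vtx x then 1 else 0)"

definition rho_lam :: "('v, 'e) op \<Rightarrow> complex" where
  "rho_lam = restrict (\<lambda>T. chi (T xi)) A"

lemma weight_loop: "i < n \<Longrightarrow> weight (ee i) = lam i"
  using loops_enum by (simp add: weight_def bij_betw_def inv_into_f_f)

lemma word_weight_square_summable: "(\<lambda>ws. (cmod (word_weight ws))\<^sup>2) summable_on loop_words"
proof -
  have "(\<Sum>e\<in>loops. (cmod (weight e))\<^sup>2) = (\<Sum>i<n. (cmod (weight (ee i)))\<^sup>2)"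
    by (rule sum.reindex_bij_betw[OF loops_enum, symmetric])
  also have "\<dots> < 1" using lam_in_open_ball by (simp add: weight_loop)
  finally show ?thesis
    using word_products_summable[OF bij_betw_finite[OF loops_enum, THEN iffD1]]
    unfolding word_weight_def power2_norm_prod_list by simp
qed

lemma valid_word_path:
  assumes ws: "ws \<in> loop_words" shows "valid (word_path ws)"
proof (cases "ws = []")
  case False
  have "s (ws ! i) = r (ws ! Suc i)" if "Suc i < length ws" for i
  proof -
    have "ws ! i \<in> set ws" "ws ! Suc i \<in> set ws" using that by simp_all
    then have "ws ! i \<in> loops" "ws ! Suc i \<in> loops" using ws by auto
    then show ?thesis by simp
  qed
  then show ?thesis using ws False by (auto simp: word_path_def valid_path_def)
qed (use x_in_V in \<open>simp add: word_path_def valid_path_def\<close>)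

lemma prange_word_path: "ws \<in> loop_words \<Longrightarrow> prange r (word_path ws) = x"
  by (cases ws) (auto simp: word_path_def)

lemma word_path_square_summable:
  assumes f: "f \<in> H"
  shows "(\<lambda>ws. (cmod (f (word_path ws)))\<^sup>2) summable_on loop_words"
    and "(\<Sum>\<^sub>\<infinity>ws\<in>loop_words. (cmod (f (word_path ws)))\<^sup>2) \<le> (l2norm f)\<^sup>2"
proof -
  have inj: "inj_on word_path loop_words" by (rule inj_onI) (auto simp: word_path_def split: if_splits)
  have all: "(\<lambda>u. (cmod (f u))\<^sup>2) summable_on UNIV"
    using l2_square_summable[OF f] by (simp add: square_summable_def)
  then have image: "(\<lambda>u. (cmod (f u))\<^sup>2) summable_on word_path ` loop_words"
    by (rule summable_on_subset_banach) simp
  then show "(\<lambda>ws. (cmod (f (word_path ws)))\<^sup>2) summable_on loop_words"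
    using summable_on_reindex[OF inj, of "\<lambda>u. (cmod (f u))\<^sup>2"] by (simp add: comp_def)
  have "(\<Sum>\<^sub>\<infinity>ws\<in>loop_words. (cmod (f (word_path ws)))\<^sup>2) = (\<Sum>\<^sub>\<infinity>u\<in>word_path ` loop_words. (cmod (f u))\<^sup>2)"
    using infsum_reindex[OF inj, of "\<lambda>u. (cmod (f u))\<^sup>2"] by (simp add: comp_def)
  also have "\<dots> \<le> (\<Sum>\<^sub>\<infinity>u. (cmod (f u))\<^sup>2)" by (rule infsum_mono_neutral[OF image all]) auto
  finally show "(\<Sum>\<^sub>\<infinity>ws\<in>loop_words. (cmod (f (word_path ws)))\<^sup>2) \<le> (l2norm f)\<^sup>2"
    by (simp add: power2_l2norm)
qed

lemma chi_abs_summable: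
  assumes f: "f \<in> H"
  shows "(\<lambda>ws. cmod (word_weight ws * f (word_path ws))) summable_on loop_words"
    and "cmod (chi f) \<le> ((\<Sum>\<^sub>\<infinity>ws\<in>loop_words. (cmod (word_weight ws))\<^sup>2) + (l2norm f)\<^sup>2) / 2"
proof -
  let ?a = "\<lambda>ws. (cmod (word_weight ws))\<^sup>2" and ?b = "\<lambda>ws. (cmod (f (word_path ws)))\<^sup>2"
  have ab: "(\<lambda>ws. 1 / 2 * (?a ws + ?b ws)) summable_on loop_words"
    using summable_on_add[OF word_weight_square_summable word_path_square_summable(1)[OF f]]
    by (rule summable_on_cmult_right)
  have le: "cmod (word_weight ws * f (word_path ws)) \<le> 1 / 2 * (?a ws + ?b ws)" for ws
    using sum_squares_bound[of "cmod (word_weight ws)" "cmod (f (word_path ws))"] by (simp add: norm_mult)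
  show abs: "(\<lambda>ws. cmod (word_weight ws * f (word_path ws))) summable_on loop_words"
    by (rule summable_on_comparison_test[OF ab le norm_ge_zero])
  have "cmod (chi f) \<le> (\<Sum>\<^sub>\<infinity>ws\<in>loop_words. cmod (word_weight ws * f (word_path ws)))"
    unfolding chi_def by (rule norm_infsum_bound[OF abs])
  also have "\<dots> \<le> (\<Sum>\<^sub>\<infinity>ws\<in>loop_words. 1 / 2 * (?a ws + ?b ws))" by (rule infsum_mono[OF abs ab le])
  also have "\<dots> = 1 / 2 * (\<Sum>\<^sub>\<infinity>ws\<in>loop_words. ?a ws + ?b ws)" by (rule infsum_cmult_right')
  also have "\<dots> = ((\<Sum>\<^sub>\<infinity>ws\<in>loop_words. ?a ws) + (\<Sum>\<^sub>\<infinity>ws\<in>loop_words. ?b ws)) / 2"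
    using infsum_add[OF word_weight_square_summable word_path_square_summable(1)[OF f]] by simp
  also have "\<dots> \<le> ((\<Sum>\<^sub>\<infinity>ws\<in>loop_words. ?a ws) + (l2norm f)\<^sup>2) / 2"
    using word_path_square_summable(2)[OF f] by simp
  finally show "cmod (chi f) \<le> ((\<Sum>\<^sub>\<infinity>ws\<in>loop_words. ?a ws) + (l2norm f)\<^sup>2) / 2" .
qed

lemma chi_summable: "f \<in> H \<Longrightarrow> (\<lambda>ws. word_weight ws * f (word_path ws)) summable_on loop_words"
  by (rule abs_summable_summable[OF chi_abs_summable(1)])

lemma chi_add: "f \<in> H \<Longrightarrow> g \<in> H \<Longrightarrow> chi (\<lambda>u. f u + g u) = chi f + chi g"
  unfolding chi_def distrib_left by (rule infsum_add[OF chi_summable chi_summable])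

lemma chi_cmult: "chi (\<lambda>u. c * f u) = c * chi f"
  unfolding chi_def using infsum_cmult_right'[of c "\<lambda>ws. word_weight ws * f (word_path ws)"]
  by (simp add: mult_ac)

lemma chi_diff: "f \<in> H \<Longrightarrow> g \<in> H \<Longrightarrow> chi (\<lambda>u. f u - g u) = chi f - chi g"
  using chi_add[of f "\<lambda>u. (-1) * g u"] l2_cmult[of g "-1"] chi_cmult[of "-1" g] by simp

lemma chi_bounded: "\<exists>K\<ge>0. \<forall>f\<in>H. cmod (chi f) \<le> K * l2norm f"
proof -
  define K where "K = ((\<Sum>\<^sub>\<infinity>ws\<in>loop_words. (cmod (word_weight ws))\<^sup>2) + 1) / 2"
  have "K \<ge> 0" unfolding K_def by (simp add: infsum_nonneg add_nonneg_nonneg)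
  moreover have "cmod (chi f) \<le> K * l2norm f" if f: "f \<in> H" for f
  proof (cases "l2norm f = 0")
    case True
    then have "f = (\<lambda>u. 0)" using l2norm_le_0_imp_zero[OF l2_square_summable[OF f]] by simp
    then show ?thesis by (simp add: chi_def)
  next
    case False
    then have pos: "l2norm f > 0" using l2norm_nonneg[of f] by simp
    define g where "g u = complex_of_real (1 / l2norm f) * f u" for u
    have g: "g \<in> H" unfolding g_def by (rule l2_cmult[OF f])
    have "l2norm g = 1" unfolding g_def l2norm_cmult using pos by (simp add: norm_divide)
    moreover have "chi f = complex_of_real (l2norm f) * chi g"
      using chi_cmult[of "complex_of_real (l2norm f)" g] pos by (simp add: g_def)
    ultimately show ?thesis
      using chi_abs_summable(2)[OF g] pos by (simp add: norm_mult K_def mult.commute)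
  qed
  ultimately show ?thesis by blast
qed

lemma chi_L:
  assumes e: "e \<in> E" and f: "f \<in> H"
  shows "chi (L e f) = (if e \<in> loops then weight e else 0) * chi f"
proof (cases "e \<in> loops")
  case True
  have shift: "L e f (word_path ws) = (case ws of [] \<Rightarrow> 0 | e' # ws' \<Rightarrow> if e' = e then f (word_path ws') else 0)"
    if "ws \<in> loop_words" for ws
    using f True valid_word_path[OF that]
    by (cases ws) (simp_all add: L_apply_tail word_path_def tail_path_def)
  have "chi (L e f) = (\<Sum>\<^sub>\<infinity>ws\<in>(#) e ` loop_words. word_weight ws * L e f (word_path ws))"
    unfolding chi_def using True shift by (intro infsum_cong_neutral) (auto split: list.splits)
  also have "\<dots> = (\<Sum>\<^sub>\<infinity>ws\<in>loop_words. weight e * (word_weight ws * f (word_path ws)))"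
    using True shift by (subst infsum_reindex) (auto simp: word_weight_def intro!: infsum_cong)
  also have "\<dots> = weight e * chi f" unfolding chi_def by (rule infsum_cmult_right')
  finally show ?thesis using True by simp
next
  case False
  have "word_weight ws * L e f (word_path ws) = 0" if "ws \<in> loop_words" for ws
    using f False that by (cases ws) (auto simp: L_apply_tail word_path_def)
  then have "chi (L e f) = 0" unfolding chi_def by (rule infsum_0)
  then show ?thesis using False by auto
qed

lemma chi_P:
  assumes f: "f \<in> H" shows "chi (P v f) = (if v = x then 1 else 0) * chi f"
proof -
  have "chi (P v f) = (\<Sum>\<^sub>\<infinity>ws\<in>loop_words. (if v = x then 1 else 0) * (word_weight ws * f (word_path ws)))"
    unfolding chi_def using f valid_word_path prange_word_path by (intro infsum_cong) (simp add: P_apply)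
  also have "\<dots> = (if v = x then 1 else 0) * chi f" unfolding chi_def by (rule infsum_cmult_right')
  finally show ?thesis .
qed

lemma xi_l2: "xi \<in> H"
proof -
  have "(\<Sum>u\<in>F. (cmod (xi u))\<^sup>2) \<le> 1\<^sup>2" if "finite F" for F :: "('v, 'e) gpath set"
  proof -
    have "(\<Sum>u\<in>F. (cmod (xi u))\<^sup>2) = (\<Sum>u\<in>F \<inter> {Vtx x}. (cmod (xi u))\<^sup>2)"
      using that by (intro sum.mono_neutral_right) (auto simp: xi_def)
    also have "\<dots> \<le> 1" by (cases "Vtx x \<in> F") (auto simp: xi_def Int_insert_right)
    finally show ?thesis by simp
  qed
  then have "square_summable xi" by (intro l2_if_finite_sums_bounded(1)[of 1]) auto
  moreover have "valid (Vtx x)" using x_in_V by (simp add: valid_path_def)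
  ultimately show ?thesis by (auto simp: l2_iff xi_def)
qed

lemma chi_xi: "chi xi = 1"
proof -
  have "chi xi = (\<Sum>\<^sub>\<infinity>ws\<in>{[]}. word_weight ws * xi (word_path ws))"
    unfolding chi_def by (rule infsum_cong_neutral) (auto simp: xi_def word_path_def)
  then show ?thesis by (simp add: word_weight_def xi_def word_path_def)
qed

lemma chi_A0: "p \<in> A0 \<Longrightarrow> \<exists>c. \<forall>f\<in>H. chi (p f) = c * chi f"
proof (induction rule: tpoly.induct)
  case (gen_L e) then show ?case using chi_L by blast
next
  case (gen_P v) then show ?case using chi_P by blast
next
  case (add p q)
  then obtain c d where "\<forall>f\<in>H. chi (p f) = c * chi f" "\<forall>f\<in>H. chi (q f) = d * chi f" by blast
  then have "chi (\<lambda>u. p f u + q f u) = (c + d) * chi f" if "f \<in> H" for f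
    using chi_add[OF bounded_op_l2[OF bounded_op_A0[OF add.hyps(1)] that]
        bounded_op_l2[OF bounded_op_A0[OF add.hyps(2)] that]] that
    by (simp add: distrib_right)
  then show ?case by blast
next
  case (smult p c)
  then obtain d where "\<forall>f\<in>H. chi (p f) = d * chi f" by blast
  then have "chi (\<lambda>u. c * p f u) = (c * d) * chi f" if "f \<in> H" for f
    using that by (simp add: chi_cmult)
  then show ?case by blast
next
  case (mult p q)
  then obtain c d where "\<forall>f\<in>H. chi (p f) = c * chi f" "\<forall>f\<in>H. chi (q f) = d * chi f" by blast
  then have "chi ((p \<circ> q) f) = (c * d) * chi f" if "f \<in> H" for f
    using bounded_op_l2[OF bounded_op_A0[OF mult.hyps(2)] that] that by simp
  then show ?case by blast
qed

lemma chi_tensor_alg: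
  assumes T: "T \<in> A" and f: "f \<in> H"
  shows "chi (T f) = chi (T xi) * chi f"
proof -
  obtain K where K: "K \<ge> 0" "\<forall>f\<in>H. cmod (chi f) \<le> K * l2norm f" using chi_bounded by blast
  have "cmod (chi (T f) - chi (T xi) * chi f) \<le> 0"
  proof (rule le_zero_if_le_epsilon_mult)
    fix \<epsilon> :: real assume "\<epsilon> > 0"
    then obtain p where p: "p \<in> A0" "\<forall>h\<in>H. l2norm (\<lambda>u. T h u - p h u) \<le> \<epsilon> * l2norm h"
      using tensor_alg_approx[OF T] by blast
    obtain c where c: "\<forall>h\<in>H. chi (p h) = c * chi h" using chi_A0[OF p(1)] by blast
    have err: "cmod (chi (T h) - chi (p h)) \<le> K * (\<epsilon> * l2norm h)" if h: "h \<in> H" for h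
    proof -
      have ph: "p h \<in> H" by (rule bounded_op_l2[OF bounded_op_A0[OF p(1)] h])
      have "cmod (chi (T h) - chi (p h)) = cmod (chi (\<lambda>u. T h u - p h u))"
        by (simp add: chi_diff[OF tensor_alg_l2[OF T h] ph])
      also have "\<dots> \<le> K * l2norm (\<lambda>u. T h u - p h u)" using K(2) l2_diff[OF tensor_alg_l2[OF T h] ph] by blast
      also have "\<dots> \<le> K * (\<epsilon> * l2norm h)" using p(2) h K(1) by (intro mult_left_mono) auto
      finally show ?thesis .
    qed
    have "chi (T f) - chi (T xi) * chi f = (chi (T f) - chi (p f)) - (chi (T xi) - chi (p xi)) * chi f"
      using c f xi_l2 chi_xi by (simp add: algebra_simps)
    then have "cmod (chi (T f) - chi (T xi) * chi f)
        \<le> cmod (chi (T f) - chi (p f)) + cmod (chi (T xi) - chi (p xi)) * cmod (chi f)"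
      by (metis norm_triangle_ineq4 norm_mult)
    also have "\<dots> \<le> K * (\<epsilon> * l2norm f) + K * (\<epsilon> * l2norm xi) * cmod (chi f)"
      by (intro add_mono mult_right_mono err f xi_l2 norm_ge_zero)
    finally show "cmod (chi (T f) - chi (T xi) * chi f) \<le> \<epsilon> * (K * l2norm f + K * l2norm xi * cmod (chi f))"
      by (simp add: algebra_simps)
  qed (use K(1) in \<open>simp add: l2norm_nonneg\<close>)
  then show ?thesis by simp
qed

lemma rho_lam_character_at: "rho_lam \<in> Mx"
proof -
  have "rho_lam \<in> M"
    unfolding characters_iff
  proof (intro conjI ballI allI)
    show "rho_lam \<in> extensional A" by (simp add: rho_lam_def)
  next
    fix S T assume S: "S \<in> A" and T: "T \<in> A"
    show "rho_lam (\<lambda>f u. S f u + T f u) = rho_lam S + rho_lam T"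
      using tensor_alg_add[OF S T] S T chi_add[OF tensor_alg_l2[OF S xi_l2] tensor_alg_l2[OF T xi_l2]]
      by (simp add: rho_lam_def)
    show "rho_lam (S \<circ> T) = rho_lam S * rho_lam T"
      using tensor_alg_comp[OF S T] S T chi_tensor_alg[OF S tensor_alg_l2[OF T xi_l2]]
      by (simp add: rho_lam_def)
  next
    fix c T assume T: "T \<in> A"
    show "rho_lam (\<lambda>f u. c * T f u) = c * rho_lam T"
      using tensor_alg_scale[OF T] T chi_cmult by (simp add: rho_lam_def)
  next
    show "\<exists>T\<in>A. rho_lam T \<noteq> 0"
      using P_in_A[OF x_in_V] chi_P[OF xi_l2, of x] chi_xi by (intro bexI[of _ "P x"]) (auto simp: rho_lam_def)
  qed
  moreover have "rho_lam (P x) = 1"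
    using P_in_A[OF x_in_V] chi_P[OF xi_l2, of x] chi_xi by (simp add: rho_lam_def)
  ultimately show ?thesis by (simp add: characters_at_iff)
qed

lemma rho_lam_loop: "i < n \<Longrightarrow> rho_lam (L (ee i)) = lam i"
  using L_in_A[OF loop_edge(1)] chi_L[OF loop_edge(1) xi_l2] loop_edge chi_xi weight_loop
  by (simp add: rho_lam_def)

end

section \<open>The weak-star topology\<close>

lemma continuous_map_mult:
  fixes f g :: "'a \<Rightarrow> 'b::real_normed_algebra"
  shows "continuous_map X euclidean f \<Longrightarrow> continuous_map X euclidean g \<Longrightarrow>
    continuous_map X euclidean (\<lambda>x. f x * g x)"
  by (simp add: continuous_map_atin tendsto_mult)

lemma closedin_equalizers:
  assumes Y: "Hausdorff_space Y"
    and "\<And>i. i \<in> I \<Longrightarrow> continuous_map X Y (f i)" "\<And>i. i \<in> I \<Longrightarrow> continuous_map X Y (g i)"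
  shows "closedin X {y \<in> topspace X. \<forall>i\<in>I. f i y = g i y}"
proof (cases "I = {}")
  case False
  then have "{y \<in> topspace X. \<forall>i\<in>I. f i y = g i y} = (\<Inter>i\<in>I. {y \<in> topspace X. f i y = g i y})"
    by auto
  also have "closedin X \<dots>"
    using False assms by (intro closedin_Inter) (auto intro!: closedin_continuous_maps_eq[OF Y])
  finally show ?thesis .
qed simp

lemma topspace_ball_topology: "topspace (ball_topology n) = closed_unit_ball_n n"
  by (auto simp: ball_topology_def closed_unit_ball_n_def)

lemma Hausdorff_ball_topology: "Hausdorff_space (ball_topology n)"
  unfolding ball_topology_def
  by (intro Hausdorff_space_subtopology) (simp add: Hausdorff_space_product_topology)

lemma closed_unit_ball_n_subset:
  assumes S: "closedin (ball_topology n) S"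
    and open_ball: "\<And>z. z \<in> extensional {..<n} \<Longrightarrow> (\<Sum>i<n. (cmod (z i))\<^sup>2) < 1 \<Longrightarrow> z \<in> S"
  shows "closed_unit_ball_n n \<subseteq> S"
proof
  fix z assume z: "z \<in> closed_unit_ball_n n"
  then have z_ext: "z \<in> extensional {..<n}" and z_norm: "(\<Sum>i<n. (cmod (z i))\<^sup>2) \<le> 1"
    by (auto simp: closed_unit_ball_n_def PiE_iff)
  define t :: "nat \<Rightarrow> real" where "t k = real k / real (Suc k)" for k
  define zk where "zk k = (\<lambda>i\<in>{..<n}. complex_of_real (t k) * z i)" for k
  have t: "0 \<le> t k" "t k < 1" for k by (auto simp: t_def)
  have zk_S: "zk k \<in> S" for k
  proof (rule open_ball)
    show "zk k \<in> extensional {..<n}" by (simp add: zk_def)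
    have "(\<Sum>i<n. (cmod (zk k i))\<^sup>2) = (t k)\<^sup>2 * (\<Sum>i<n. (cmod (z i))\<^sup>2)"
      using t[of k] by (simp add: zk_def norm_mult power_mult_distrib sum_distrib_left)
    also have "\<dots> \<le> (t k)\<^sup>2" using z_norm by (simp add: mult_left_le)
    also have "\<dots> < 1" using t[of k] by (simp add: power_less_one_iff)
    finally show "(\<Sum>i<n. (cmod (zk k i))\<^sup>2) < 1" .
  qed
  have "limitin (product_topology (\<lambda>_. euclidean) {..<n}) zk z sequentially"
    unfolding limitin_componentwise
  proof (intro conjI ballI)
    fix i assume "i \<in> {..<n}"
    moreover have "(\<lambda>k. complex_of_real (t k) * z i) \<longlonglongrightarrow> complex_of_real 1 * z i"
      unfolding t_def by (intro tendsto_intros LIMSEQ_n_over_Suc_n)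
    ultimately show "limitin euclidean (\<lambda>k. zk k i) (z i) sequentially" by (simp add: zk_def)
  qed (auto simp: z_ext zk_def)
  moreover have "zk k \<in> closed_unit_ball_n n" for k
    using zk_S closedin_subset[OF S] by (auto simp: topspace_ball_topology)
  ultimately have "limitin (ball_topology n) zk z sequentially"
    using z by (simp add: ball_topology_def limitin_subtopology)
  then show "z \<in> S" by (rule limitin_closedin[OF _ S]) (simp_all add: zk_S)
qed

context digraph_loops
begin

abbreviation pointwise :: "(('v, 'e) op \<Rightarrow> complex) topology" where
  "pointwise \<equiv> product_topology (\<lambda>_. euclidean) A"

abbreviation "phi \<equiv> (\<lambda>\<rho>. \<lambda>i\<in>{..<n}. \<rho> (L (ee i)))"

lemma continuous_map_evaluation: "T \<in> A \<Longrightarrow> continuous_map pointwise euclidean (\<lambda>\<rho>. \<rho> T)"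
  using continuous_map_product_projection[of T A "\<lambda>_. euclidean"] by simp

lemma topspace_weak_star: "topspace (weak_star_topology V E r s x) = Mx"
  using character_extensional
  by (auto simp: weak_star_topology_def characters_at_iff PiE_iff extensional_def)

lemma closedin_characters_at: "closedin pointwise Mx"
proof -
  let ?add = "{\<rho> \<in> topspace pointwise. \<forall>(S, T)\<in>A \<times> A. \<rho> (\<lambda>f u. S f u + T f u) = \<rho> S + \<rho> T}"
  let ?scale = "{\<rho> \<in> topspace pointwise. \<forall>(c, T)\<in>UNIV \<times> A. \<rho> (\<lambda>f u. c * T f u) = c * \<rho> T}"
  let ?mult = "{\<rho> \<in> topspace pointwise. \<forall>(S, T)\<in>A \<times> A. \<rho> (S \<circ> T) = \<rho> S * \<rho> T}"
  let ?unit = "{\<rho> \<in> topspace pointwise. \<forall>T\<in>{P x}. \<rho> T = 1}"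
  have "closedin pointwise ?add" "closedin pointwise ?scale" "closedin pointwise ?mult" "closedin pointwise ?unit"
    unfolding case_prod_beta
    by (intro closedin_equalizers[OF Hausdorff_space_euclidean];
        auto intro!: continuous_map_evaluation continuous_map_add continuous_map_mult
          tensor_alg_add tensor_alg_scale tensor_alg_comp P_in_A x_in_V)+
  moreover have "Mx = ?add \<inter> ?scale \<inter> ?mult \<inter> ?unit"
  proof -
    have "\<exists>T\<in>A. \<rho> T \<noteq> 0" if "\<rho> (P x) = 1" for \<rho> :: "('v, 'e) op \<Rightarrow> complex"
      using P_in_A[OF x_in_V] that by force
    then show ?thesis by (auto simp: characters_at_iff characters_iff PiE_iff)
  qed
  ultimately show ?thesis by (simp add: closedin_Int)
qed

lemma compactin_characters_at: "compactin pointwise Mx"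
proof -
  have "\<exists>C. \<forall>T\<in>A. C T \<ge> 0 \<and> (\<forall>f\<in>H. l2norm (T f) \<le> C T * l2norm f)"
    by (rule bchoice) (use bounded_op_bound[OF bounded_op_tensor_alg] in blast)
  then obtain C where C: "\<forall>T\<in>A. C T \<ge> 0 \<and> (\<forall>f\<in>H. l2norm (T f) \<le> C T * l2norm f)" ..
  have "Mx \<subseteq> PiE A (\<lambda>T. cball 0 (C T))"
  proof
    fix \<rho> assume "\<rho> \<in> Mx"
    then have \<rho>: "\<rho> \<in> M" by (simp add: characters_at_iff)
    have "cmod (\<rho> T) \<le> C T" if "T \<in> A" for T
      using C that by (intro character_norm_le[OF \<rho> that]) auto
    then show "\<rho> \<in> PiE A (\<lambda>T. cball 0 (C T))"
      using character_extensional[OF \<rho>] by (auto simp: PiE_iff)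
  qed
  from closed_compactin[OF _ this closedin_characters_at] show ?thesis by (simp add: compactin_PiE)
qed

lemma phi_in_ball: "\<rho> \<in> Mx \<Longrightarrow> phi \<rho> \<in> closed_unit_ball_n n"
  using character_at_in_ball by (simp add: closed_unit_ball_n_def)

lemma continuous_map_phi: "continuous_map (weak_star_topology V E r s x) (ball_topology n) phi"
  unfolding ball_topology_def
proof (rule continuous_map_into_subtopology)
  show "phi \<in> topspace (weak_star_topology V E r s x) \<rightarrow> closed_unit_ball_n n"
    using phi_in_ball by (auto simp: topspace_weak_star)
  have "continuous_map (weak_star_topology V E r s x) euclidean (\<lambda>\<rho>. \<rho> (L (ee i)))" if "i < n" for i
    unfolding weak_star_topology_def
    by (rule continuous_map_from_subtopology[OF continuous_map_evaluation[OF L_in_A[OF loop_edge(1)[OF that]]]])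
  then show "continuous_map (weak_star_topology V E r s x) (product_topology (\<lambda>_. euclidean) {..<n}) phi"
    by (auto simp: continuous_map_componentwise)
qed

lemma open_ball_subset_phi_image:
  assumes z: "z \<in> extensional {..<n}" "(\<Sum>i<n. (cmod (z i))\<^sup>2) < 1"
  shows "z \<in> phi ` Mx"
proof -
  interpret ball_character V E r s x n ee z
    by unfold_locales (use edge_ends x_in_V loops_enum z(2) in auto)
  have "phi rho_lam = z" using rho_lam_loop z(1) by (auto simp: extensional_def)
  then show ?thesis using rho_lam_character_at by (intro image_eqI[OF sym])
qed

lemma phi_image: "phi ` Mx = closed_unit_ball_n n"
proof
  show "phi ` Mx \<subseteq> closed_unit_ball_n n" using phi_in_ball by blast
  have "compactin (ball_topology n) (phi ` Mx)"
    using image_compactin[OF _ continuous_map_phi, of Mx] compactin_characters_at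
    by (simp add: weak_star_topology_def compactin_subtopology)
  then have "closedin (ball_topology n) (phi ` Mx)"
    by (rule compactin_imp_closedin[OF Hausdorff_ball_topology])
  then show "closed_unit_ball_n n \<subseteq> phi ` Mx"
    by (rule closed_unit_ball_n_subset) (rule open_ball_subset_phi_image)
qed

theorem homeomorphic_map_phi: "homeomorphic_map (weak_star_topology V E r s x) (ball_topology n) phi"
proof (rule continuous_imp_homeomorphic_map[OF continuous_map_phi _ Hausdorff_ball_topology])
  show "compact_space (weak_star_topology V E r s x)"
    unfolding weak_star_topology_def by (rule compact_space_subtopology[OF compactin_characters_at])
  show "phi ` topspace (weak_star_topology V E r s x) = topspace (ball_topology n)"
    by (simp add: topspace_weak_star topspace_ball_topology phi_image)
  show "inj_on phi (topspace (weak_star_topology V E r s x))"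
    unfolding topspace_weak_star
  proof (rule inj_onI)
    fix \<rho> \<sigma> assume \<rho>\<sigma>: "\<rho> \<in> Mx" "\<sigma> \<in> Mx" and eq: "phi \<rho> = phi \<sigma>"
    have "\<rho> (L (ee i)) = \<sigma> (L (ee i))" if "i < n" for i using fun_cong[OF eq, of i] that by simp
    then show "\<rho> = \<sigma>" by (rule characters_at_eqI[OF \<rho>\<sigma>])
  qed
qed

end

theorem proposition2p1:
  fixes V :: "'v set" and E :: "'e set" and r s :: "'e \<Rightarrow> 'v"
    and x :: 'v and n :: nat and ee :: "nat \<Rightarrow> 'e"
  assumes "countable_digraph V E r s"
    and "x \<in> V"
    and "bij_betw ee {..<n} {e \<in> E. s e = x \<and> r e = x}"
  shows "homeomorphic_map (weak_star_topology V E r s x) (ball_topology n)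
           (\<lambda>\<rho>. \<lambda>i\<in>{..<n}. \<rho> (shiftL V E r s (ee i)))"
proof -
  interpret digraph_loops V E r s x n ee
    using assms by unfold_locales (auto simp: countable_digraph_def)
  show ?thesis by (rule homeomorphic_map_phi)
qed

end
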